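(* Let $K\subset\mathbb{R}^n$ be closed and consider $\Sigma:\ \dot x\in F(x),\ x\in C$, satisfying (SA), and assume Assumptions 1, 2 and 3 hold. Let $\phi$ be a solution to $\Sigma$ with $\phi(0)=x\in\mathcal{P}$ that leaves $K$ immediately. Then $$\operatorname{cl}(F_\phi(x))\subset T_{\partial K\cap C}(x)\setminus T_{\partial K\setminus\operatorname{int}(C)}(x).$$
   Context: Standing assumption (SA): $C \subset \mathbb{R}^n$ is closed; $F:\mathbb{R}^n \rightrightarrows \mathbb{R}^n$ has $F(x)$ nonempty, closed and convex for all $x \in C$; $F$ is continuous (upper and lower semicontinuous) and one-sided locally Lipschitz: for every nonempty compact $\mathcal{N} \subset \operatorname{dom} F$ there is $k>0$ with $(x_1-x_2)^\top F(x_1) \subset (x_1-x_2)^\top F(x_2) + k|x_1-x_2|^2\mathbb{B}$ for all $x_1,x_2 \in \mathcal{N}$ ($\mathbb{B}$ the closed unit ball). Solutions: $\phi$ is locally absolutely continuous with values in $C$, $\operatorname{dom}\phi=[0,T]$ ($T\ge0$) or $[0,T)$ ($T\in\mathbb{R}_{\ge0}\cup\{+\infty\}$), and $\dot\phi(t)\in F(\phi(t))$ for a.e. $t\in\operatorname{dom}\phi$. A solution $\phi$ with $\phi(0)=x$ leaves $K$ immediately if there is $T>0$ with $\phi((0,T])\subset C\setminus K$. Set of initial speeds: $F_\phi(x):=\{v\in\mathbb{R}^n:\ \exists\{t_i\}\subset\mathbb{R}_{>0},\ t_i\to0,\ \lim_i (\phi(t_i)-\phi(0))/t_i=v\}$.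 Contingent cone of $S$ at $x\in\operatorname{cl}(S)$: $T_S(x)=\{v: \exists t_i\to 0^+, \exists v_i\to v,\ x+t_iv_i\in S\}$. Adjacent cone: $T^a_S(x)=\{v: \forall t_i\to 0^+, \exists v_i\to v,\ x+t_iv_i\in S\}$. $\mathcal{P}:=\{x\in\partial K\cap\partial C:\ \mathcal{N}(x)\cap(C\setminus K)\neq\emptyset \text{ for every neighborhood } \mathcal{N}(x) \text{ of } x\}$. Assumption 1: $F(x)\subset T_K(x)$ for all $x\in\mathcal{P}$. Assumption 2: $F(x)\cap T_{\partial K\cap\partial C}(x)=\emptyset$ for all $x\in\mathcal{P}$. Assumption 3: for each $x\in\mathcal{P}$: (a) $T_{\partial K}(x)=T^a_{\partial K}(x)$; (b) $T_C(x)=T^a_C(x)$; (c) there exist a neighborhood $\mathcal{N}(x)$, $c>0$, $\alpha\in[0,1)$ such that for all $(x_1,x_2)\in((\partial K\setminus C)\cap\mathcal{N}(x))\times((\partial C\setminus\partial K)\cap\mathcal{N}(x))$ there exist $(v_1,v_2)\in T_{\partial K}(x_1)\times T_C(x_2)$ with $|(v_1,v_2)|\le c|x_1-x_2|$ and $x_2-x_1\in v_1-v_2+\alpha|x_1-x_2|\mathbb{B}$. *)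

theory Defs
  imports "HOL-Analysis.Analysis"
begin

definition sv_dom :: "('a \<Rightarrow> 'b set) \<Rightarrow> 'a set" where
  "sv_dom F = {x. F x \<noteq> {}}"

definition sv_usc_at :: "('a::metric_space \<Rightarrow> 'b::topological_space set) \<Rightarrow> 'a \<Rightarrow> bool" where
  "sv_usc_at F x \<longleftrightarrow> (\<forall>U. open U \<and> F x \<subseteq> U \<longrightarrow> (\<exists>\<eta>>0. \<forall>y\<in>ball x \<eta>. F y \<subseteq> U))"

definition sv_lsc_at :: "('a::metric_space \<Rightarrow> 'b::topological_space set) \<Rightarrow> 'a \<Rightarrow> bool" where
  "sv_lsc_at F x \<longleftrightarrow> (\<forall>U. open U \<and> F x \<inter> U \<noteq> {} \<longrightarrow>
      (\<exists>\<eta>>0. \<forall>y\<in>ball x \<eta> \<inter> sv_dom F. F y \<inter> U \<noteq> {}))"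

definition sv_continuous :: "('a::metric_space \<Rightarrow> 'b::topological_space set) \<Rightarrow> bool" where
  "sv_continuous F \<longleftrightarrow> (\<forall>x\<in>sv_dom F. sv_usc_at F x \<and> sv_lsc_at F x)"

definition one_sided_loc_lipschitz :: "('a::euclidean_space \<Rightarrow> 'a set) \<Rightarrow> bool" where
  "one_sided_loc_lipschitz F \<longleftrightarrow>
     (\<forall>N. N \<noteq> {} \<and> compact N \<and> N \<subseteq> sv_dom F \<longrightarrow>
        (\<exists>k>0. \<forall>x1\<in>N. \<forall>x2\<in>N. \<forall>v\<in>F x1. \<exists>w\<in>F x2. \<exists>r.
            \<bar>r\<bar> \<le> k * (norm (x1 - x2))\<^sup>2 \<and> (x1 - x2) \<bullet> v = (x1 - x2) \<bullet> w + r))"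

definition standing_assumption :: "'a::euclidean_space set \<Rightarrow> ('a \<Rightarrow> 'a set) \<Rightarrow> bool" where
  "standing_assumption C F \<longleftrightarrow> closed C \<and>
     (\<forall>x\<in>C. F x \<noteq> {} \<and> closed (F x) \<and> convex (F x)) \<and>
     sv_continuous F \<and> one_sided_loc_lipschitz F"

definition abs_continuous_on_interval :: "(real \<Rightarrow> 'a::real_normed_vector) \<Rightarrow> real \<Rightarrow> real \<Rightarrow> bool" where
  "abs_continuous_on_interval \<phi> a b \<longleftrightarrow>
     (\<forall>\<epsilon>>0. \<exists>\<delta>>0. \<forall>(n::nat) (s::nat \<Rightarrow> real) (u::nat \<Rightarrow> real).
        (\<forall>i<n. a \<le> s i \<and> s i \<le> u i \<and> u i \<le> b) \<and>
        (\<forall>i<n. \<forall>j<n. i \<noteq> j \<longrightarrow> u i \<le> s j \<or> u j \<le> s i) \<and>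
        (\<Sum>i<n. u i - s i) < \<delta>
        \<longrightarrow> (\<Sum>i<n. norm (\<phi> (u i) - \<phi> (s i))) < \<epsilon>)"

definition loc_abs_continuous_on :: "real set \<Rightarrow> (real \<Rightarrow> 'a::real_normed_vector) \<Rightarrow> bool" where
  "loc_abs_continuous_on D \<phi> \<longleftrightarrow> (\<forall>a b. a \<le> b \<and> {a..b} \<subseteq> D \<longrightarrow> abs_continuous_on_interval \<phi> a b)"

definition solution_domain :: "real set \<Rightarrow> bool" where
  "solution_domain D \<longleftrightarrow> (\<exists>T\<ge>0. D = {0..T} \<or> D = {0..<T}) \<or> D = {0..}"

definition is_solution :: "'a::euclidean_space set \<Rightarrow> ('a \<Rightarrow> 'a set) \<Rightarrow> (real \<Rightarrow> 'a) \<Rightarrow> real set \<Rightarrow> bool" where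
  "is_solution C F \<phi> D \<longleftrightarrow> solution_domain D \<and> loc_abs_continuous_on D \<phi> \<and>
     (\<forall>t\<in>D. \<phi> t \<in> C) \<and>
     (AE t in lebesgue. t \<in> D \<longrightarrow> (\<exists>v. (\<phi> has_vector_derivative v) (at t within D) \<and> v \<in> F (\<phi> t)))"

definition leaves_immediately :: "'a set \<Rightarrow> 'a set \<Rightarrow> (real \<Rightarrow> 'a) \<Rightarrow> real set \<Rightarrow> bool" where
  "leaves_immediately C K \<phi> D \<longleftrightarrow> (\<exists>T>0. {0<..T} \<subseteq> D \<and> \<phi> ` {0<..T} \<subseteq> C - K)"

definition initial_speeds :: "(real \<Rightarrow> 'a::real_normed_vector) \<Rightarrow> real set \<Rightarrow> 'a set" where
  "initial_speeds \<phi> D = {v. \<exists>t::nat \<Rightarrow> real. (\<forall>i. t i > 0 \<and> t i \<in> D) \<and> t \<longlonglongrightarrow> 0 \<and>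
       (\<lambda>i. (\<phi> (t i) - \<phi> 0) /\<^sub>R t i) \<longlonglongrightarrow> v}"

definition contingent_cone :: "'a::real_normed_vector set \<Rightarrow> 'a \<Rightarrow> 'a set" where
  "contingent_cone S x = {v. \<exists>(t::nat \<Rightarrow> real) (w::nat \<Rightarrow> 'a). (\<forall>i. t i > 0) \<and> t \<longlonglongrightarrow> 0 \<and>
       w \<longlonglongrightarrow> v \<and> (\<forall>i. x + t i *\<^sub>R w i \<in> S)}"

definition adjacent_cone :: "'a::real_normed_vector set \<Rightarrow> 'a \<Rightarrow> 'a set" where
  "adjacent_cone S x = {v. \<forall>t::nat \<Rightarrow> real. (\<forall>i. t i > 0) \<and> t \<longlonglongrightarrow> 0 \<longrightarrow>
       (\<exists>w::nat \<Rightarrow> 'a. w \<longlonglongrightarrow> v \<and> (\<forall>i. x + t i *\<^sub>R w i \<in> S))}"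

text \<open>The set \<P>.\<close>
definition bad_points :: "'a::real_normed_vector set \<Rightarrow> 'a set \<Rightarrow> 'a set" where
  "bad_points C K = {x \<in> frontier K \<inter> frontier C.
      \<forall>N. open N \<and> x \<in> N \<longrightarrow> N \<inter> (C - K) \<noteq> {}}"

definition assumption1 :: "'a::euclidean_space set \<Rightarrow> ('a \<Rightarrow> 'a set) \<Rightarrow> 'a set \<Rightarrow> bool" where
  "assumption1 C F K \<longleftrightarrow> (\<forall>x\<in>bad_points C K. F x \<subseteq> contingent_cone K x)"

definition assumption2 :: "'a::euclidean_space set \<Rightarrow> ('a \<Rightarrow> 'a set) \<Rightarrow> 'a set \<Rightarrow> bool" where
  "assumption2 C F K \<longleftrightarrow>
     (\<forall>x\<in>bad_points C K. F x \<inter> contingent_cone (frontier K \<inter> frontier C) x = {})"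

definition assumption3 :: "'a::euclidean_space set \<Rightarrow> 'a set \<Rightarrow> bool" where
  "assumption3 C K \<longleftrightarrow> (\<forall>x\<in>bad_points C K.
     contingent_cone (frontier K) x = adjacent_cone (frontier K) x \<and>
     contingent_cone C x = adjacent_cone C x \<and>
     (\<exists>N c \<alpha>. open N \<and> x \<in> N \<and> c > 0 \<and> 0 \<le> \<alpha> \<and> \<alpha> < 1 \<and>
        (\<forall>x1\<in>(frontier K - C) \<inter> N. \<forall>x2\<in>(frontier C - frontier K) \<inter> N.
           \<exists>v1\<in>contingent_cone (frontier K) x1. \<exists>v2\<in>contingent_cone C x2.
             norm (v1, v2) \<le> c * norm (x1 - x2) \<and>
             norm ((x2 - x1) - (v1 - v2)) \<le> \<alpha> * norm (x1 - x2))))"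

end

theory Submission
  imports Defs
begin

(* Let v be an initial speed of the solution at x. Difference quotients of an absolutely
   continuous arc lie in every closed convex set containing its velocities, and upper
   semicontinuity of F provides closed half-spaces containing the velocities near x, so v lies
   in F(x), which is contained in T_K(x) by Assumption 1. Since the solution is outside K for
   small t > 0, v is also tangent to the complement of K; a segment from inside K to outside K
   crosses the boundary, so v is tangent to bd K.

   Assumption 3(c) yields a local linear error bound for the pairs (bd K, C) and
   (bd K - int C, C): minimising |y1 - y2| + l (|y1 - x1| + |y2 - x2|) over the two sets gives
   a pair whose first-order conditions contradict the transversal tangent vectors of 3(c)
   unless one of the two points already lies in the intersection. Under such a bound, a
   direction that is adjacent to one set and contingent to the other is contingent to their
   intersection, and 3(a), 3(b) say that the contingent cones of bd K and C are adjacent. Hence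
   v is tangent to the intersection of bd K and C, while tangency to bd K - int C would make v
   tangent to the intersection of bd K and bd C, contradicting Assumption 2. *)


section \<open>Contingent cones\<close>

lemma contingent_cone_iff:
  "v \<in> contingent_cone S x \<longleftrightarrow>
     (\<forall>e>0. \<forall>d>0. \<exists>t w. 0 < t \<and> t < d \<and> dist w v < e \<and> x + t *\<^sub>R w \<in> S)"
proof
  assume "v \<in> contingent_cone S x"
  then obtain t w where t: "\<forall>i. t i > 0" "t \<longlonglongrightarrow> 0" and w: "w \<longlonglongrightarrow> v"
    and S: "\<forall>i. x + t i *\<^sub>R w i \<in> S"
    unfolding contingent_cone_def by blast
  show "\<forall>e>0. \<forall>d>0. \<exists>t w. 0 < t \<and> t < d \<and> dist w v < e \<and> x + t *\<^sub>R w \<in> S"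
  proof (intro allI impI)
    fix e d :: real
    assume "e > 0" "d > 0"
    then have "eventually (\<lambda>i. t i < d \<and> dist (w i) v < e) sequentially"
      using t(2) w by (auto intro: eventually_conj order_tendstoD tendstoD)
    then obtain i where "t i < d" "dist (w i) v < e"
      using eventually_sequentially by auto
    then show "\<exists>t w. 0 < t \<and> t < d \<and> dist w v < e \<and> x + t *\<^sub>R w \<in> S"
      using t(1) S by blast
  qed
next
  assume "\<forall>e>0. \<forall>d>0. \<exists>t w. 0 < t \<and> t < d \<and> dist w v < e \<and> x + t *\<^sub>R w \<in> S"
  then have "\<forall>k::nat. \<exists>t w. 0 < t \<and> t < 1 / Suc k \<and> dist w v < 1 / Suc k \<and> x + t *\<^sub>R w \<in> S"
    by simp
  then obtain t w where tw: "\<And>k. 0 < t k \<and> t k < 1 / Suc k \<and> dist (w k) v < 1 / Suc k \<and> x + t k *\<^sub>R w k \<in> S"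
    by metis
  have "t \<longlonglongrightarrow> 0"
  proof (rule LIMSEQ_norm_0)
    show "norm (t k) < 1 / real (Suc k)" for k
      using tw[of k] by simp
  qed
  moreover have "w \<longlonglongrightarrow> v"
  proof (rule LIM_zero_cancel, rule LIMSEQ_norm_0)
    show "norm (w k - v) < 1 / real (Suc k)" for k
      using tw[of k] by (simp add: dist_norm)
  qed
  ultimately show "v \<in> contingent_cone S x"
    unfolding contingent_cone_def using tw by blast
qed

lemma closed_contingent_cone: "closed (contingent_cone S x)"
  unfolding closure_subset_eq[symmetric]
proof
  fix v
  assume "v \<in> closure (contingent_cone S x)"
  then have approx: "\<forall>e>0. \<exists>v'\<in>contingent_cone S x. dist v' v < e"
    by (simp add: closure_approachable)
  show "v \<in> contingent_cone S x"
    unfolding contingent_cone_iff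
  proof (intro allI impI)
    fix e d :: real
    assume "e > 0" "d > 0"
    then obtain v' where v': "v' \<in> contingent_cone S x" "dist v' v < e / 2"
      using approx half_gt_zero by blast
    then obtain t w where "0 < t" "t < d" "dist w v' < e / 2" "x + t *\<^sub>R w \<in> S"
      using \<open>e > 0\<close> \<open>d > 0\<close> unfolding contingent_cone_iff by (meson half_gt_zero)
    moreover have "dist w v < e"
      using dist_triangle[of w v v'] \<open>dist w v' < e / 2\<close> v'(2) by linarith
    ultimately show "\<exists>t w. 0 < t \<and> t < d \<and> dist w v < e \<and> x + t *\<^sub>R w \<in> S"
      by blast
  qed
qed

lemma contingent_cone_mono: "S \<subseteq> T \<Longrightarrow> contingent_cone S x \<subseteq> contingent_cone T x"
  unfolding contingent_cone_def by blast

lemma contingent_coneI_eventually: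
  assumes "t \<longlonglongrightarrow> 0" "w \<longlonglongrightarrow> v"
    and "eventually (\<lambda>i. 0 < t i \<and> x + t i *\<^sub>R w i \<in> S) sequentially"
  shows "v \<in> contingent_cone S x"
  unfolding contingent_cone_iff
proof (intro allI impI)
  fix e d :: real
  assume "e > 0" "d > 0"
  then have "eventually (\<lambda>i. t i < d) sequentially" "eventually (\<lambda>i. dist (w i) v < e) sequentially"
    using assms(1,2) by (auto intro: order_tendstoD tendstoD)
  with assms(3) have "eventually (\<lambda>i. 0 < t i \<and> x + t i *\<^sub>R w i \<in> S \<and> t i < d \<and> dist (w i) v < e) sequentially"
    by eventually_elim blast
  then obtain i where "0 < t i" "x + t i *\<^sub>R w i \<in> S" "t i < d" "dist (w i) v < e"
    using eventually_sequentially by auto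
  then show "\<exists>t w. 0 < t \<and> t < d \<and> dist w v < e \<and> x + t *\<^sub>R w \<in> S"
    by blast
qed

lemma frontier_crossing:
  fixes K :: "'a::real_normed_vector set"
  assumes "0 < s" "0 < t" "x + s *\<^sub>R w \<in> K" "x + t *\<^sub>R q \<notin> K"
  shows "\<exists>l\<in>{0..1}. x + ((1 - l) * s + l * t) *\<^sub>R ((1 - l) *\<^sub>R w + l *\<^sub>R q) \<in> frontier K"
proof -
  define \<gamma> where "\<gamma> l = x + ((1 - l) * s + l * t) *\<^sub>R ((1 - l) *\<^sub>R w + l *\<^sub>R q)" for l
  have "connected (\<gamma> ` {0..1})"
    unfolding \<gamma>_def by (intro connected_continuous_image continuous_intros) auto
  moreover have "\<gamma> 0 \<in> K" "\<gamma> 1 \<notin> K"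
    using assms by (auto simp: \<gamma>_def)
  moreover have "\<gamma> 0 \<in> \<gamma> ` {0..1}" "\<gamma> 1 \<in> \<gamma> ` {0..1}"
    by auto
  ultimately have "\<gamma> ` {0..1} \<inter> frontier K \<noteq> {}"
    by (intro connected_Int_frontier) blast+
  then show ?thesis
    unfolding \<gamma>_def by auto
qed

lemma tendsto_convex_combination:
  fixes s t :: "nat \<Rightarrow> 'a::real_normed_vector"
  assumes "s \<longlonglongrightarrow> x" "t \<longlonglongrightarrow> x" "\<And>i. l i \<in> {0..1}"
  shows "(\<lambda>i. (1 - l i) *\<^sub>R s i + l i *\<^sub>R t i) \<longlonglongrightarrow> x"
proof (rule LIM_zero_cancel, rule Lim_null_comparison)
  show "eventually (\<lambda>i. norm ((1 - l i) *\<^sub>R s i + l i *\<^sub>R t i - x) \<le> norm (s i - x) + norm (t i - x))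
      sequentially"
  proof (intro always_eventually allI)
    fix i
    have "(1 - l i) *\<^sub>R s i + l i *\<^sub>R t i - x = (1 - l i) *\<^sub>R (s i - x) + l i *\<^sub>R (t i - x)"
      by (simp add: algebra_simps)
    then have "norm ((1 - l i) *\<^sub>R s i + l i *\<^sub>R t i - x) \<le> (1 - l i) * norm (s i - x) + l i * norm (t i - x)"
      using norm_triangle_ineq[of "(1 - l i) *\<^sub>R (s i - x)" "l i *\<^sub>R (t i - x)"] assms(3)[of i] by auto
    also have "\<dots> \<le> norm (s i - x) + norm (t i - x)"
      using assms(3)[of i] by (intro add_mono mult_left_le_one_le) auto
    finally show "norm ((1 - l i) *\<^sub>R s i + l i *\<^sub>R t i - x) \<le> norm (s i - x) + norm (t i - x)" .
  qed
  show "(\<lambda>i. norm (s i - x) + norm (t i - x)) \<longlonglongrightarrow> 0"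
    using tendsto_add[OF tendsto_norm_zero[OF LIM_zero[OF assms(1)]] tendsto_norm_zero[OF LIM_zero[OF assms(2)]]]
    by simp
qed

lemma contingent_cone_Int_compl_subset_frontier:
  fixes K :: "'a::real_normed_vector set"
  shows "contingent_cone K x \<inter> contingent_cone (- K) x \<subseteq> contingent_cone (frontier K) x"
proof
  fix v
  assume "v \<in> contingent_cone K x \<inter> contingent_cone (- K) x"
  then obtain s w t q where s: "\<forall>i. s i > 0" "s \<longlonglongrightarrow> 0" and w: "w \<longlonglongrightarrow> v"
    and sK: "\<forall>i. x + s i *\<^sub>R w i \<in> K"
    and t: "\<forall>i. t i > 0" "t \<longlonglongrightarrow> 0" and q: "q \<longlonglongrightarrow> v"
    and tK: "\<forall>i. x + t i *\<^sub>R q i \<notin> K"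
    unfolding contingent_cone_def by auto
  have "\<exists>l. l \<in> {0..1} \<and>
      x + ((1 - l) * s i + l * t i) *\<^sub>R ((1 - l) *\<^sub>R w i + l *\<^sub>R q i) \<in> frontier K" for i
    using frontier_crossing[of "s i" "t i" x "w i" K "q i"] s(1) t(1) sK tK by (simp add: Bex_def)
  then have "\<forall>i. \<exists>l. l \<in> {0..1} \<and>
      x + ((1 - l) * s i + l * t i) *\<^sub>R ((1 - l) *\<^sub>R w i + l *\<^sub>R q i) \<in> frontier K"
    by (intro allI)
  from choice[OF this] obtain l where l: "\<And>i. l i \<in> {0..1}"
    and crossing: "\<And>i. x + ((1 - l i) * s i + l i * t i) *\<^sub>R ((1 - l i) *\<^sub>R w i + l i *\<^sub>R q i) \<in> frontier K"
    by blast
  define \<tau> where "\<tau> = (\<lambda>i. (1 - l i) * s i + l i * t i)"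
  have "\<tau> \<longlonglongrightarrow> 0"
    using tendsto_convex_combination[OF s(2) t(2), of l] l by (simp add: \<tau>_def)
  moreover have "(\<lambda>i. (1 - l i) *\<^sub>R w i + l i *\<^sub>R q i) \<longlonglongrightarrow> v"
    using tendsto_convex_combination[OF w q, of l] l by blast
  moreover have "0 < \<tau> i" for i
  proof (cases "l i = 1")
    case False
    then have "0 < (1 - l i) * s i" "0 \<le> l i * t i"
      using l[of i] s(1) t(1) less_imp_le[OF t(1)[rule_format, of i]] by auto
    then show ?thesis
      by (simp add: \<tau>_def)
  qed (use t(1) in \<open>simp add: \<tau>_def\<close>)
  ultimately show "v \<in> contingent_cone (frontier K) x"
    using crossing by (intro contingent_coneI_eventually) (auto simp: \<tau>_def)
qed

section \<open>Local linear regularity of a pair of sets\<close>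

definition locally_linearly_regular :: "'a::metric_space set \<Rightarrow> 'a set \<Rightarrow> 'a \<Rightarrow> bool" where
  "locally_linearly_regular A C x \<longleftrightarrow>
     (\<exists>r>0. \<exists>M. \<forall>x1\<in>A. \<forall>x2\<in>C. dist x1 x < r \<longrightarrow> dist x2 x < r \<longrightarrow>
        (\<exists>z\<in>A \<inter> C. dist z x1 \<le> M * dist x1 x2))"

lemma contingent_cone_Int_if_linearly_regular:
  fixes A C :: "'a::real_normed_vector set"
  assumes "locally_linearly_regular A C x"
    and t: "\<forall>i. t i > 0" "t \<longlonglongrightarrow> 0" and a: "a \<longlonglongrightarrow> v" and b: "b \<longlonglongrightarrow> v"
    and A: "\<forall>i. x + t i *\<^sub>R a i \<in> A" and C: "\<forall>i. x + t i *\<^sub>R b i \<in> C"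
  shows "v \<in> contingent_cone (A \<inter> C) x"
proof -
  obtain r M where "r > 0" and reg: "\<And>x1 x2. x1 \<in> A \<Longrightarrow> x2 \<in> C \<Longrightarrow> dist x1 x < r \<Longrightarrow> dist x2 x < r \<Longrightarrow>
      \<exists>z\<in>A \<inter> C. dist z x1 \<le> M * dist x1 x2"
    using assms(1) unfolding locally_linearly_regular_def by blast
  define x1 where "x1 i = x + t i *\<^sub>R a i" for i
  define x2 where "x2 i = x + t i *\<^sub>R b i" for i
  define z where "z i = (SOME z. z \<in> A \<inter> C \<and> dist z (x1 i) \<le> M * dist (x1 i) (x2 i))" for i
  have "x1 \<longlonglongrightarrow> x + 0 *\<^sub>R v" "x2 \<longlonglongrightarrow> x + 0 *\<^sub>R v"
    unfolding x1_def x2_def by (intro tendsto_intros t a b)+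
  then have "eventually (\<lambda>i. dist (x1 i) x < r \<and> dist (x2 i) x < r) sequentially"
    using \<open>r > 0\<close> by (auto intro: eventually_conj tendstoD)
  then have z: "eventually (\<lambda>i. z i \<in> A \<inter> C \<and> dist (z i) (x1 i) \<le> M * dist (x1 i) (x2 i)) sequentially"
  proof eventually_elim
    case (elim i)
    then have "\<exists>z. z \<in> A \<inter> C \<and> dist z (x1 i) \<le> M * dist (x1 i) (x2 i)"
      using reg[of "x1 i" "x2 i"] A C by (auto simp: x1_def x2_def)
    then show ?case
      unfolding z_def by (rule someI_ex)
  qed
  define w where "w i = (z i - x) /\<^sub>R t i" for i
  have "(\<lambda>i. w i - a i) \<longlonglongrightarrow> 0"
  proof (rule Lim_null_comparison)
    show "eventually (\<lambda>i. norm (w i - a i) \<le> M * norm (a i - b i)) sequentially"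
      using z
    proof eventually_elim
      case (elim i)
      have ti: "t i > 0"
        using t(1) by blast
      have "w i - a i = (z i - x1 i) /\<^sub>R t i"
        using ti by (simp add: w_def x1_def algebra_simps)
      also have "norm \<dots> = dist (z i) (x1 i) / t i"
        using ti by (simp add: dist_norm divide_inverse_commute)
      also have "\<dots> \<le> M * dist (x1 i) (x2 i) / t i"
        using elim ti by (simp add: divide_right_mono)
      also have "dist (x1 i) (x2 i) = t i * norm (a i - b i)"
        using ti by (simp add: x1_def x2_def dist_norm flip: scaleR_diff_right)
      finally show ?case
        using ti by simp
    qed
    show "(\<lambda>i. M * norm (a i - b i)) \<longlonglongrightarrow> 0"
      using tendsto_mult_left[OF tendsto_norm[OF tendsto_diff[OF a b]], of M] by simp
  qed
  then have "w \<longlonglongrightarrow> v"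
    using tendsto_add[OF _ a] by fastforce
  moreover have "eventually (\<lambda>i. 0 < t i \<and> x + t i *\<^sub>R w i \<in> A \<inter> C) sequentially"
    using z
  proof eventually_elim
    case (elim i)
    moreover have "t i > 0"
      using t(1) by blast
    ultimately show ?case
      by (simp add: w_def)
  qed
  ultimately show ?thesis
    using t(2) by (rule contingent_coneI_eventually[rotated])
qed

lemma adjacent_contingent_subset_contingent_Int:
  fixes A C :: "'a::real_normed_vector set"
  assumes "locally_linearly_regular A C x"
  shows "adjacent_cone A x \<inter> contingent_cone C x \<subseteq> contingent_cone (A \<inter> C) x"
proof
  fix v
  assume v: "v \<in> adjacent_cone A x \<inter> contingent_cone C x"
  then obtain t b where t: "\<forall>i. t i > 0" "t \<longlonglongrightarrow> 0" and "b \<longlonglongrightarrow> v" "\<forall>i. x + t i *\<^sub>R b i \<in> C"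
    unfolding contingent_cone_def by blast
  moreover obtain a where "a \<longlonglongrightarrow> v" "\<forall>i. x + t i *\<^sub>R a i \<in> A"
    using v t unfolding adjacent_cone_def by blast
  ultimately show "v \<in> contingent_cone (A \<inter> C) x"
    by (intro contingent_cone_Int_if_linearly_regular[OF assms])
qed

lemma contingent_adjacent_subset_contingent_Int:
  fixes A C :: "'a::real_normed_vector set"
  assumes "locally_linearly_regular A C x"
  shows "contingent_cone A x \<inter> adjacent_cone C x \<subseteq> contingent_cone (A \<inter> C) x"
proof
  fix v
  assume v: "v \<in> contingent_cone A x \<inter> adjacent_cone C x"
  then obtain t a where t: "\<forall>i. t i > 0" "t \<longlonglongrightarrow> 0" and "a \<longlonglongrightarrow> v" "\<forall>i. x + t i *\<^sub>R a i \<in> A"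
    unfolding contingent_cone_def by blast
  moreover obtain b where "b \<longlonglongrightarrow> v" "\<forall>i. x + t i *\<^sub>R b i \<in> C"
    using v t unfolding adjacent_cone_def by blast
  ultimately show "v \<in> contingent_cone (A \<inter> C) x"
    by (intro contingent_cone_Int_if_linearly_regular[OF assms])
qed

lemma penalized_pair_minimizer:
  fixes A C :: "'a::{real_normed_vector,heine_borel} set"
  assumes "closed A" "closed C" "x1 \<in> A" "x2 \<in> C" "l > 0"
  obtains y1 y2 where "y1 \<in> A" "y2 \<in> C"
    "\<And>z1 z2. z1 \<in> A \<Longrightarrow> z2 \<in> C \<Longrightarrow>
      dist y1 y2 + l * (dist y1 x1 + dist y2 x2) \<le> dist z1 z2 + l * (dist z1 x1 + dist z2 x2)"
proof -
  define g where "g p = dist (fst p) (snd p) + l * (dist (fst p) x1 + dist (snd p) x2)" for p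
  define R where "R = dist x1 x2 / l"
  define S where "S = (A \<inter> cball x1 R) \<times> (C \<inter> cball x2 R)"
  have "compact S"
    unfolding S_def using assms by (intro compact_Times closed_Int_compact compact_cball)
  moreover have "(x1, x2) \<in> S"
    using assms by (simp add: S_def R_def)
  moreover have "continuous_on S g"
    unfolding g_def by (intro continuous_intros)
  ultimately obtain y where "y \<in> S" and y_min: "\<And>p. p \<in> S \<Longrightarrow> g y \<le> g p"
    using continuous_attains_inf[of S g] by blast
  \<comment> \<open>Outside \<open>S\<close> the penalty alone exceeds \<open>g (x1, x2) = dist x1 x2\<close>.\<close>
  have "g y \<le> g (z1, z2)" if "z1 \<in> A" "z2 \<in> C" for z1 z2
  proof (cases "(z1, z2) \<in> S")
    case False
    then have "R < dist z1 x1 \<or> R < dist z2 x2"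
      using that by (auto simp: S_def dist_commute)
    then have "R < dist z1 x1 + dist z2 x2"
      by (smt (verit) zero_le_dist)
    then have "l * R < l * (dist z1 x1 + dist z2 x2)"
      using \<open>l > 0\<close> by simp
    moreover have "l * R = g (x1, x2)"
      using \<open>l > 0\<close> by (simp add: g_def R_def)
    moreover have "l * (dist z1 x1 + dist z2 x2) \<le> g (z1, z2)"
      by (simp add: g_def)
    ultimately show ?thesis
      using y_min[OF \<open>(x1, x2) \<in> S\<close>] by linarith
  qed (rule y_min)
  moreover obtain y1 y2 where "y = (y1, y2)"
    by fastforce
  ultimately show thesis
    using that \<open>y \<in> S\<close> by (auto simp: S_def g_def)
qed

lemma penalized_pair_exists:
  fixes A C :: "'a::{real_normed_vector,heine_borel} set"
  assumes "closed A" "closed C" "x1 \<in> A" "x2 \<in> C" "l > 0"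
  obtains y1 y2 where "y1 \<in> A" "y2 \<in> C"
    and "dist y1 x1 \<le> dist x1 x2 / l" "dist y2 x2 \<le> dist x1 x2 / l" "dist y1 y2 \<le> dist x1 x2"
    and "\<And>z. z \<in> A \<Longrightarrow> dist y1 y2 \<le> dist z y2 + l * dist z y1"
    and "\<And>z. z \<in> C \<Longrightarrow> dist y1 y2 \<le> dist y1 z + l * dist z y2"
proof -
  obtain y1 y2 where y: "y1 \<in> A" "y2 \<in> C"
    and y_min: "\<And>z1 z2. z1 \<in> A \<Longrightarrow> z2 \<in> C \<Longrightarrow>
      dist y1 y2 + l * (dist y1 x1 + dist y2 x2) \<le> dist z1 z2 + l * (dist z1 x1 + dist z2 x2)"
    using penalized_pair_minimizer[OF assms] by blast
  have "dist y1 y2 + (l * dist y1 x1 + l * dist y2 x2) \<le> dist x1 x2"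
    using y_min[OF assms(3,4)] by (simp add: distrib_left)
  moreover have "0 \<le> l * dist y1 x1" "0 \<le> l * dist y2 x2"
    using \<open>l > 0\<close> by simp_all
  ultimately have "l * dist y1 x1 \<le> dist x1 x2" "l * dist y2 x2 \<le> dist x1 x2" "dist y1 y2 \<le> dist x1 x2"
    using zero_le_dist[of y1 y2] by linarith+
  then have "dist y1 x1 \<le> dist x1 x2 / l" "dist y2 x2 \<le> dist x1 x2 / l" "dist y1 y2 \<le> dist x1 x2"
    using \<open>l > 0\<close> by (simp_all add: pos_le_divide_eq mult.commute)
  moreover have "dist y1 y2 \<le> dist z y2 + l * dist z y1" if "z \<in> A" for z
  proof -
    have "dist y1 y2 + l * dist y1 x1 \<le> dist z y2 + l * dist z x1"
      using y_min[OF that y(2)] by (simp add: distrib_left)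
    moreover have "l * dist z x1 \<le> l * dist z y1 + l * dist y1 x1"
      using \<open>l > 0\<close> dist_triangle[of z x1 y1] by (simp flip: distrib_left)
    ultimately show ?thesis
      by linarith
  qed
  moreover have "dist y1 y2 \<le> dist y1 z + l * dist z y2" if "z \<in> C" for z
  proof -
    have "dist y1 y2 + l * dist y2 x2 \<le> dist y1 z + l * dist z x2"
      using y_min[OF y(1) that] by (simp add: distrib_left)
    moreover have "l * dist z x2 \<le> l * dist z y2 + l * dist y2 x2"
      using \<open>l > 0\<close> dist_triangle[of z x2 y2] by (simp flip: distrib_left)
    ultimately show ?thesis
      by linarith
  qed
  ultimately show thesis
    using that y by blast
qed

lemma penalized_point_not_interior:
  fixes y1 y2 :: "'a::real_normed_vector"
  assumes "y1 \<noteq> y2" "l < 1"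
    and penalized: "\<And>z. z \<in> C \<Longrightarrow> dist y1 y2 \<le> dist y1 z + l * dist z y2"
  shows "y2 \<notin> interior C"
proof
  assume "y2 \<in> interior C"
  then obtain e where "e > 0" "ball y2 e \<subseteq> C"
    using mem_interior by blast
  define d where "d = dist y1 y2"
  define h where "h = min 1 (e / (2 * d))"
  have "d > 0"
    using assms(1) by (simp add: d_def)
  then have h: "0 < h" "h \<le> 1" "h * d < e"
    using \<open>e > 0\<close> by (auto simp: h_def min_def field_simps)
  define z where "z = y2 + h *\<^sub>R (y1 - y2)"
  have "dist z y2 = h * d"
    using h by (simp add: z_def d_def dist_norm)
  moreover have "dist y1 z = (1 - h) * d"
  proof -
    have "y1 - z = (1 - h) *\<^sub>R (y1 - y2)"
      by (simp add: z_def algebra_simps)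
    then show ?thesis
      using h by (simp add: d_def dist_norm)
  qed
  moreover have "z \<in> C"
    using \<open>ball y2 e \<subseteq> C\<close> h \<open>dist z y2 = h * d\<close> by (auto simp: dist_commute)
  then have "d \<le> dist y1 z + l * dist z y2"
    unfolding d_def by (rule penalized)
  ultimately have "d \<le> (1 - h) * d + l * (h * d)"
    by simp
  then have "h * d * (1 - l) \<le> 0"
    by (simp add: algebra_simps)
  moreover have "h * d * (1 - l) > 0"
    using h \<open>d > 0\<close> \<open>l < 1\<close> by simp
  ultimately show False
    by linarith
qed

lemma contingent_cone_inner_le:
  fixes w :: "'a::real_inner"
  assumes v: "v \<in> contingent_cone S y" and "0 \<le> l" and "e > 0"
    and near: "\<And>z. z \<in> S \<Longrightarrow> dist z y < e \<Longrightarrow> norm w \<le> norm (w - (z - y)) + l * norm (z - y)"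
  shows "w \<bullet> v \<le> l * norm w * norm v"
proof (cases "w = 0")
  case False
  obtain t u where t: "\<forall>i. t i > 0" "t \<longlonglongrightarrow> 0" and u: "u \<longlonglongrightarrow> v"
    and S: "\<forall>i. y + t i *\<^sub>R u i \<in> S"
    using v unfolding contingent_cone_def by blast
  have "(\<lambda>i. y + t i *\<^sub>R u i) \<longlonglongrightarrow> y + 0 *\<^sub>R v"
    by (intro tendsto_intros t u)
  then have "eventually (\<lambda>i. dist (y + t i *\<^sub>R u i) y < e) sequentially"
    using \<open>e > 0\<close> by (auto intro: tendstoD)
  moreover have "(\<lambda>i. l * t i * norm (u i)) \<longlonglongrightarrow> l * 0 * norm v"
    by (intro tendsto_intros t u)
  then have "eventually (\<lambda>i. l * t i * norm (u i) < norm w) sequentially"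
    using False by (intro order_tendstoD) auto
  ultimately have ev: "eventually (\<lambda>i. 2 * (w \<bullet> u i) \<le> 2 * l * norm w * norm (u i) + t i * (norm (u i))\<^sup>2) sequentially"
  proof eventually_elim
    case (elim i)
    have ti: "t i > 0"
      using t(1) by blast
    have "norm w - l * t i * norm (u i) \<le> norm (w - t i *\<^sub>R u i)"
      using near[OF S[rule_format] elim(1)] ti by (simp add: mult.assoc)
    then have "(norm w - l * t i * norm (u i))\<^sup>2 \<le> (norm (w - t i *\<^sub>R u i))\<^sup>2"
      using elim(2) by (intro power_mono) auto
    moreover have "(norm w - l * t i * norm (u i))\<^sup>2
        = (norm w)\<^sup>2 - 2 * l * t i * norm w * norm (u i) + (l * t i * norm (u i))\<^sup>2"
      by (simp add: power2_eq_square algebra_simps)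
    moreover have "(norm (w - t i *\<^sub>R u i))\<^sup>2 = (norm w)\<^sup>2 - 2 * t i * (w \<bullet> u i) + (t i)\<^sup>2 * (norm (u i))\<^sup>2"
      using power2_norm_eq_inner[of w] power2_norm_eq_inner[of "u i"] power2_norm_eq_inner[of "w - t i *\<^sub>R u i"]
      by (simp add: inner_diff_left inner_diff_right inner_commute power2_eq_square algebra_simps)
    moreover have "0 \<le> (l * t i * norm (u i))\<^sup>2"
      by simp
    ultimately have "2 * t i * (w \<bullet> u i) \<le> 2 * l * t i * norm w * norm (u i) + (t i)\<^sup>2 * (norm (u i))\<^sup>2"
      by linarith
    then have "t i * (2 * (w \<bullet> u i)) \<le> t i * (2 * l * norm w * norm (u i) + t i * (norm (u i))\<^sup>2)"
      by (simp add: power2_eq_square algebra_simps)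
    then show ?case
      using ti by simp
  qed
  have upper: "(\<lambda>i. 2 * l * norm w * norm (u i) + t i * (norm (u i))\<^sup>2) \<longlonglongrightarrow>
      2 * l * norm w * norm v + 0 * (norm v)\<^sup>2"
    by (intro tendsto_intros t u)
  have lower: "(\<lambda>i. 2 * (w \<bullet> u i)) \<longlonglongrightarrow> 2 * (w \<bullet> v)"
    by (intro tendsto_intros u)
  from tendsto_le[OF sequentially_bot upper lower ev] show ?thesis
    by simp
qed simp

lemma transversal_inner_bound:
  fixes w v1 v2 :: "'a::real_inner"
  assumes "w \<noteq> 0" "0 \<le> l"
    and "w \<bullet> v1 \<le> l * norm w * norm v1" "- (w \<bullet> v2) \<le> l * norm w * norm v2"
    and "norm v1 \<le> c * norm w" "norm v2 \<le> c * norm w"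
    and "norm (w - (v1 - v2)) \<le> \<alpha> * norm w"
  shows "1 - \<alpha> \<le> 2 * l * c"
proof -
  have "(norm w)\<^sup>2 = w \<bullet> (v1 - v2) + w \<bullet> (w - (v1 - v2))"
    by (simp add: power2_norm_eq_inner inner_diff_right)
  moreover have "w \<bullet> (v1 - v2) \<le> l * norm w * (2 * c * norm w)"
  proof -
    have "w \<bullet> (v1 - v2) \<le> l * norm w * (norm v1 + norm v2)"
      using assms(3,4) by (simp add: inner_diff_right algebra_simps)
    also have "\<dots> \<le> l * norm w * (2 * c * norm w)"
      using assms(2,5,6) by (intro mult_left_mono) auto
    finally show ?thesis .
  qed
  moreover have "w \<bullet> (w - (v1 - v2)) \<le> norm w * (\<alpha> * norm w)"
    using norm_cauchy_schwarz[of w "w - (v1 - v2)"] assms(7) mult_left_mono[OF assms(7) norm_ge_zero[of w]]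
    by linarith
  moreover have "l * norm w * (2 * c * norm w) + norm w * (\<alpha> * norm w)
      = (norm w)\<^sup>2 * (2 * l * c) + (norm w)\<^sup>2 * \<alpha>"
    by (simp add: power2_eq_square algebra_simps)
  moreover have "(norm w)\<^sup>2 * (1 - \<alpha>) = (norm w)\<^sup>2 - (norm w)\<^sup>2 * \<alpha>"
    by (simp add: algebra_simps)
  ultimately have "(norm w)\<^sup>2 * (1 - \<alpha>) \<le> (norm w)\<^sup>2 * (2 * l * c)"
    by linarith
  moreover have "(norm w)\<^sup>2 > 0"
    using assms(1) by simp
  ultimately show ?thesis
    by (simp add: mult_le_cancel_left_pos)
qed

lemma transversal_excludes_penalized_pair:
  fixes B C :: "'a::real_inner set"
  assumes "closed C" "y1 \<in> B - C" "y2 \<in> C" "0 \<le> l" "2 * l * c < 1 - \<alpha>"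
    and near_B: "\<And>z. z \<in> B - C \<Longrightarrow> dist y1 y2 \<le> dist z y2 + l * dist z y1"
    and near_C: "\<And>z. z \<in> C \<Longrightarrow> dist y1 y2 \<le> dist y1 z + l * dist z y2"
    and v1: "v1 \<in> contingent_cone B y1" and v2: "v2 \<in> contingent_cone C y2"
    and "norm (v1, v2) \<le> c * norm (y1 - y2)"
    and "norm ((y2 - y1) - (v1 - v2)) \<le> \<alpha> * norm (y1 - y2)"
  shows False
proof -
  obtain e where "e > 0" "ball y1 e \<subseteq> - C"
    using assms(1,2) open_contains_ball[of "- C"] by blast
  have "(y2 - y1) \<bullet> v1 \<le> l * norm (y2 - y1) * norm v1"
  proof (rule contingent_cone_inner_le[OF v1 \<open>0 \<le> l\<close> \<open>e > 0\<close>])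
    fix z
    assume "z \<in> B" "dist z y1 < e"
    then have "z \<in> B - C"
      using \<open>ball y1 e \<subseteq> - C\<close> by (auto simp: dist_commute)
    moreover have "norm (y2 - y1 - (z - y1)) = dist z y2" "norm (y2 - y1) = dist y1 y2"
      "norm (z - y1) = dist z y1"
      by (simp_all add: dist_norm norm_minus_commute)
    ultimately show "norm (y2 - y1) \<le> norm (y2 - y1 - (z - y1)) + l * norm (z - y1)"
      using near_B by simp
  qed
  moreover have "(y1 - y2) \<bullet> v2 \<le> l * norm (y1 - y2) * norm v2"
  proof (rule contingent_cone_inner_le[OF v2 \<open>0 \<le> l\<close> zero_less_one])
    fix z
    assume "z \<in> C"
    moreover have "norm (y1 - y2 - (z - y2)) = dist y1 z" "norm (y1 - y2) = dist y1 y2"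
      "norm (z - y2) = dist z y2"
      by (simp_all add: dist_norm)
    ultimately show "norm (y1 - y2) \<le> norm (y1 - y2 - (z - y2)) + l * norm (z - y2)"
      using near_C by simp
  qed
  moreover have "y2 - y1 \<noteq> 0"
    using assms(2,3) by auto
  moreover have "norm v1 \<le> c * norm (y2 - y1)" "norm v2 \<le> c * norm (y2 - y1)"
    using assms(10) norm_fst_le[of v1 v2] norm_snd_le[of v2 v1] by (auto simp: norm_minus_commute)
  moreover have "norm (y1 - y2) = norm (y2 - y1)" "- ((y2 - y1) \<bullet> v2) = (y1 - y2) \<bullet> v2"
    by (rule norm_minus_commute) (simp add: inner_diff_left)
  ultimately have "1 - \<alpha> \<le> 2 * l * c"
    using assms(11) \<open>0 \<le> l\<close> by (intro transversal_inner_bound[of "y2 - y1" l v1 v2 c \<alpha>]) simp_all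
  then show False
    using assms(5) by linarith
qed

lemma penalized_pair_meets_intersection:
  fixes A B C :: "'a::real_inner set"
  assumes "closed C" "A \<subseteq> B" "B - C \<subseteq> A" "B \<inter> frontier C \<subseteq> A"
    and "y1 \<in> A" "y2 \<in> C" "y1 \<in> N" "y2 \<in> N" "0 < l" "l < 1" "2 * l * c < 1 - \<alpha>"
    and near_A: "\<And>z. z \<in> A \<Longrightarrow> dist y1 y2 \<le> dist z y2 + l * dist z y1"
    and near_C: "\<And>z. z \<in> C \<Longrightarrow> dist y1 y2 \<le> dist y1 z + l * dist z y2"
    and transversal: "\<forall>x1\<in>(B - C) \<inter> N. \<forall>x2\<in>(frontier C - B) \<inter> N.
           \<exists>v1\<in>contingent_cone B x1. \<exists>v2\<in>contingent_cone C x2.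
             norm (v1, v2) \<le> c * norm (x1 - x2) \<and>
             norm ((x2 - x1) - (v1 - v2)) \<le> \<alpha> * norm (x1 - x2)"
  shows "y1 \<in> C \<or> y2 \<in> A"
proof (rule ccontr)
  assume "\<not> (y1 \<in> C \<or> y2 \<in> A)"
  then have "y1 \<in> B - C" "y2 \<notin> A"
    using assms(2,5) by auto
  have "y2 \<notin> interior C"
    using \<open>y1 \<in> B - C\<close> assms(6,10) near_C by (intro penalized_point_not_interior[of y1 y2 l]) auto
  then have "y2 \<in> frontier C - B"
    using \<open>y2 \<notin> A\<close> assms(1,4,6) by (auto simp: frontier_def)
  then obtain v1 v2 where v: "v1 \<in> contingent_cone B y1" "v2 \<in> contingent_cone C y2"
    "norm (v1, v2) \<le> c * norm (y1 - y2)" "norm ((y2 - y1) - (v1 - v2)) \<le> \<alpha> * norm (y1 - y2)"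
    using transversal \<open>y1 \<in> B - C\<close> assms(7,8) by blast
  have near_B: "\<And>z. z \<in> B - C \<Longrightarrow> dist y1 y2 \<le> dist z y2 + l * dist z y1"
    using near_A assms(3) by blast
  show False
    using transversal_excludes_penalized_pair[OF assms(1) \<open>y1 \<in> B - C\<close> assms(6) less_imp_le[OF assms(9)]
        assms(11) near_B near_C v] .
qed

lemma locally_linearly_regularI:
  fixes A B C :: "'a::euclidean_space set"
  assumes "closed A" "closed C" "A \<subseteq> B" "B - C \<subseteq> A" "B \<inter> frontier C \<subseteq> A"
    and "open N" "x \<in> N" "c > 0" "\<alpha> < 1"
    and transversal: "\<forall>x1\<in>(B - C) \<inter> N. \<forall>x2\<in>(frontier C - B) \<inter> N.
           \<exists>v1\<in>contingent_cone B x1. \<exists>v2\<in>contingent_cone C x2.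
             norm (v1, v2) \<le> c * norm (x1 - x2) \<and>
             norm ((x2 - x1) - (v1 - v2)) \<le> \<alpha> * norm (x1 - x2)"
  shows "locally_linearly_regular A C x"
proof -
  obtain R where "R > 0" "ball x R \<subseteq> N"
    using assms(6,7) open_contains_ball by blast
  define l where "l = min (1 / 2) ((1 - \<alpha>) / (4 * c))"
  have l: "0 < l" "l < 1"
    using assms(8,9) by (auto simp: l_def)
  have "l * (4 * c) \<le> 1 - \<alpha>"
    using assms(8) by (simp add: l_def pos_le_divide_eq[symmetric])
  then have "2 * l * c < 1 - \<alpha>"
    using assms(8,9) by (simp add: algebra_simps)
  define r where "r = l * R / 4"
  have "r > 0" "2 * r / l + r < R"
    using l \<open>R > 0\<close> by (simp_all add: r_def field_simps)
  have "\<exists>z\<in>A \<inter> C. dist z x1 \<le> (1 + 1 / l) * dist x1 x2"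
    if x1: "x1 \<in> A" "dist x1 x < r" and x2: "x2 \<in> C" "dist x2 x < r" for x1 x2
  proof -
    obtain y1 y2 where y: "y1 \<in> A" "y2 \<in> C"
      and y_near: "dist y1 x1 \<le> dist x1 x2 / l" "dist y2 x2 \<le> dist x1 x2 / l" "dist y1 y2 \<le> dist x1 x2"
      and near_A: "\<And>z. z \<in> A \<Longrightarrow> dist y1 y2 \<le> dist z y2 + l * dist z y1"
      and near_C: "\<And>z. z \<in> C \<Longrightarrow> dist y1 y2 \<le> dist y1 z + l * dist z y2"
      using penalized_pair_exists[OF assms(1,2) x1(1) x2(1) l(1)] by blast
    have "dist x1 x2 / l < 2 * r / l"
      using x1(2) x2(2) dist_triangle2[of x1 x2 x] l(1) by (simp add: divide_strict_right_mono)
    then have "dist y1 x < R" "dist y2 x < R"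
      using \<open>2 * r / l + r < R\<close> x1(2) x2(2) y_near dist_triangle[of y1 x x1] dist_triangle[of y2 x x2]
      by linarith+
    then have "y1 \<in> N" "y2 \<in> N"
      using \<open>ball x R \<subseteq> N\<close> by (auto simp: dist_commute)
    then have "y1 \<in> C \<or> y2 \<in> A"
      using penalized_pair_meets_intersection[OF assms(2-5) y _ _ l \<open>2 * l * c < 1 - \<alpha>\<close> near_A near_C
          transversal] by blast
    moreover have "dist x1 x2 + dist x1 x2 / l = (1 + 1 / l) * dist x1 x2"
      by (simp add: algebra_simps)
    ultimately show ?thesis
      using y y_near zero_le_dist[of x1 x2] dist_triangle[of y2 x1 y1] dist_commute[of y1 y2]
      by (smt (verit) IntI)
  qed
  then show ?thesis
    unfolding locally_linearly_regular_def using \<open>r > 0\<close> by blast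
qed

section \<open>Absolutely continuous functions\<close>

lemma abs_continuous_on_intervalD:
  assumes "abs_continuous_on_interval f a b" "\<epsilon> > 0"
  obtains \<delta> where "\<delta> > 0"
    "\<And>(n::nat) s u. \<forall>i<n. a \<le> s i \<and> s i \<le> u i \<and> u i \<le> b \<Longrightarrow>
        \<forall>i<n. \<forall>j<n. i \<noteq> j \<longrightarrow> u i \<le> s j \<or> u j \<le> s i \<Longrightarrow>
        (\<Sum>i<n. u i - s i) < \<delta> \<Longrightarrow> (\<Sum>i<n. norm (f (u i) - f (s i))) < \<epsilon>"
proof -
  obtain \<delta> where "\<delta> > 0" and \<delta>: "\<forall>(n::nat) s u. (\<forall>i<n. a \<le> s i \<and> s i \<le> u i \<and> u i \<le> b) \<and>
      (\<forall>i<n. \<forall>j<n. i \<noteq> j \<longrightarrow> u i \<le> s j \<or> u j \<le> s i) \<and> (\<Sum>i<n. u i - s i) < \<delta> \<longrightarrow>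
      (\<Sum>i<n. norm (f (u i) - f (s i))) < \<epsilon>"
    using assms(1)[unfolded abs_continuous_on_interval_def, rule_format, OF assms(2)] by (elim exE conjE)
  show thesis
    by (rule that[OF \<open>\<delta> > 0\<close>], rule \<delta>[rule_format], intro conjI; assumption)
qed

lemma abs_continuous_on_interval_imp_continuous_on:
  fixes f :: "real \<Rightarrow> 'a::real_normed_vector"
  assumes "abs_continuous_on_interval f a b"
  shows "continuous_on {a..b} f"
  unfolding continuous_on_iff
proof (intro ballI allI impI)
  fix t e :: real
  assume "t \<in> {a..b}" "e > 0"
  obtain \<delta> where "\<delta> > 0" and \<delta>: "\<And>(n::nat) s u. \<forall>i<n. a \<le> s i \<and> s i \<le> u i \<and> u i \<le> b \<Longrightarrow>
      \<forall>i<n. \<forall>j<n. i \<noteq> j \<longrightarrow> u i \<le> s j \<or> u j \<le> s i \<Longrightarrow>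
      (\<Sum>i<n. u i - s i) < \<delta> \<Longrightarrow> (\<Sum>i<n. norm (f (u i) - f (s i))) < e"
    using abs_continuous_on_intervalD[OF assms \<open>e > 0\<close>] by blast
  have "dist (f t') (f t) < e" if "t' \<in> {a..b}" "dist t' t < \<delta>" for t'
  proof -
    have "norm (f (max t t') - f (min t t')) < e"
      using \<delta>[of "Suc 0" "\<lambda>_. min t t'" "\<lambda>_. max t t'"] that \<open>t \<in> {a..b}\<close>
      by (auto simp: dist_real_def)
    then show ?thesis
      by (cases "t \<le> t'") (auto simp: dist_norm norm_minus_commute)
  qed
  then show "\<exists>d>0. \<forall>t'\<in>{a..b}. dist t' t < d \<longrightarrow> dist (f t') (f t) < e"
    using \<open>\<delta> > 0\<close> by blast
qed

lemma abs_continuous_on_interval_dominated: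
  fixes f :: "real \<Rightarrow> 'a::real_normed_vector" and g :: "real \<Rightarrow> 'b::real_normed_vector"
  assumes f: "abs_continuous_on_interval f a b" and "0 \<le> P" "0 \<le> Q"
    and dominated: "\<And>s u. a \<le> s \<Longrightarrow> s \<le> u \<Longrightarrow> u \<le> b \<Longrightarrow>
      norm (g u - g s) \<le> P * (u - s) + Q * norm (f u - f s)"
  shows "abs_continuous_on_interval g a b"
  unfolding abs_continuous_on_interval_def
proof (intro allI impI)
  fix \<epsilon> :: real
  assume "\<epsilon> > 0"
  have "P + 1 > 0" "Q + 1 > 0"
    using assms(2,3) by linarith+
  then have "\<epsilon> / (2 * (Q + 1)) > 0"
    using \<open>\<epsilon> > 0\<close> by simp
  then obtain \<delta> where "\<delta> > 0" and \<delta>: "\<And>(n::nat) s u. \<forall>i<n. a \<le> s i \<and> s i \<le> u i \<and> u i \<le> b \<Longrightarrow>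
      \<forall>i<n. \<forall>j<n. i \<noteq> j \<longrightarrow> u i \<le> s j \<or> u j \<le> s i \<Longrightarrow>
      (\<Sum>i<n. u i - s i) < \<delta> \<Longrightarrow> (\<Sum>i<n. norm (f (u i) - f (s i))) < \<epsilon> / (2 * (Q + 1))"
    using abs_continuous_on_intervalD[OF f] by blast
  define \<delta>' where "\<delta>' = min \<delta> (\<epsilon> / (2 * (P + 1)))"
  have half: "c * (\<epsilon> / (2 * c)) = \<epsilon> / 2" if "c > 0" for c
    using that by simp
  show "\<exists>\<delta>>0. \<forall>(n::nat) s u. (\<forall>i<n. a \<le> s i \<and> s i \<le> u i \<and> u i \<le> b) \<and>
      (\<forall>i<n. \<forall>j<n. i \<noteq> j \<longrightarrow> u i \<le> s j \<or> u j \<le> s i) \<and> (\<Sum>i<n. u i - s i) < \<delta> \<longrightarrow>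
      (\<Sum>i<n. norm (g (u i) - g (s i))) < \<epsilon>"
  proof (intro exI[of _ \<delta>'] conjI allI impI)
    show "\<delta>' > 0"
      using \<open>\<delta> > 0\<close> \<open>\<epsilon> > 0\<close> \<open>P + 1 > 0\<close> by (simp add: \<delta>'_def)
    fix n :: nat and s u :: "nat \<Rightarrow> real"
    assume "(\<forall>i<n. a \<le> s i \<and> s i \<le> u i \<and> u i \<le> b) \<and>
      (\<forall>i<n. \<forall>j<n. i \<noteq> j \<longrightarrow> u i \<le> s j \<or> u j \<le> s i) \<and> (\<Sum>i<n. u i - s i) < \<delta>'"
    then have intervals: "\<forall>i<n. a \<le> s i \<and> s i \<le> u i \<and> u i \<le> b"
      and disjoint: "\<forall>i<n. \<forall>j<n. i \<noteq> j \<longrightarrow> u i \<le> s j \<or> u j \<le> s i"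
      and short: "(\<Sum>i<n. u i - s i) < \<delta>'"
      by blast+
    have "(\<Sum>i<n. norm (g (u i) - g (s i))) \<le> (\<Sum>i<n. P * (u i - s i) + Q * norm (f (u i) - f (s i)))"
      using intervals by (intro sum_mono dominated) auto
    also have "\<dots> = P * (\<Sum>i<n. u i - s i) + Q * (\<Sum>i<n. norm (f (u i) - f (s i)))"
      by (simp add: sum.distrib sum_distrib_left)
    also have "\<dots> \<le> P * (\<epsilon> / (2 * (P + 1))) + Q * (\<epsilon> / (2 * (Q + 1)))"
      using short \<delta>[OF intervals disjoint] assms(2,3) by (intro add_mono mult_left_mono) (auto simp: \<delta>'_def)
    also have "\<dots> < (P + 1) * (\<epsilon> / (2 * (P + 1))) + (Q + 1) * (\<epsilon> / (2 * (Q + 1)))"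
      using \<open>\<epsilon> > 0\<close> \<open>P + 1 > 0\<close> \<open>Q + 1 > 0\<close>
      by (intro add_le_less_mono mult_right_mono mult_strict_right_mono) auto
    also have "\<dots> = \<epsilon>"
      unfolding half[OF \<open>P + 1 > 0\<close>] half[OF \<open>Q + 1 > 0\<close>] by simp
    finally show "(\<Sum>i<n. norm (g (u i) - g (s i))) < \<epsilon>" .
  qed
qed

lemma tagged_partial_division_real_memD:
  assumes "p tagged_partial_division_of {a..b::real}" "(t, K) \<in> p"
  shows "K = {Inf K..Sup K}" "a \<le> Inf K" "Inf K \<le> t" "t \<le> Sup K" "Sup K \<le> b"
proof -
  obtain c d where "K = cbox c d"
    using tagged_partial_division_ofD(4)[OF assms] by blast
  moreover have "t \<in> K" "K \<subseteq> {a..b}"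
    using tagged_partial_division_ofD(2,3)[OF assms] by auto
  ultimately show "K = {Inf K..Sup K}" "a \<le> Inf K" "Inf K \<le> t" "t \<le> Sup K" "Sup K \<le> b"
    by auto
qed

lemma tagged_partial_division_enumeration:
  assumes q: "q tagged_partial_division_of {a..b::real}"
  shows "\<exists>(n::nat) s u. (\<forall>i<n. a \<le> s i \<and> s i \<le> u i \<and> u i \<le> b) \<and>
    (\<forall>i<n. \<forall>j<n. i \<noteq> j \<longrightarrow> u i \<le> s j \<or> u j \<le> s i) \<and>
    (\<forall>F :: real \<Rightarrow> real \<Rightarrow> real. (\<forall>c. F c c = 0) \<longrightarrow>
       (\<Sum>i<n. F (s i) (u i)) = (\<Sum>(t, K)\<in>q. F (Inf K) (Sup K)))"
proof -
  have mem: "snd p = {Inf (snd p)..Sup (snd p)}" "a \<le> Inf (snd p)" "Inf (snd p) \<le> Sup (snd p)"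
    "Sup (snd p) \<le> b" if "p \<in> q" for p
    using tagged_partial_division_real_memD[OF q, of "fst p" "snd p"] that by (auto intro: order_trans)
  \<comment> \<open>Degenerate intervals contribute nothing to the sums but would violate disjointness.\<close>
  define q' where "q' = {p \<in> q. Inf (snd p) < Sup (snd p)}"
  have "finite q'"
    using tagged_partial_division_ofD(1)[OF q] by (simp add: q'_def)
  then obtain h where h: "bij_betw h {..<card q'} q'"
    using ex_bij_betw_nat_finite by (fastforce simp: atLeast0LessThan)
  define n where "n = card q'"
  define s where "s i = Inf (snd (h i))" for i
  define u where "u i = Sup (snd (h i))" for i
  have hq': "h i \<in> q'" if "i < n" for i
    using h that by (auto simp: bij_betw_def n_def)
  then have hq: "h i \<in> q" "s i < u i" if "i < n" for i
    using that by (auto simp: q'_def s_def u_def)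
  have "\<forall>i<n. a \<le> s i \<and> s i \<le> u i \<and> u i \<le> b"
    using hq mem by (simp add: s_def u_def)
  moreover have "\<forall>i<n. \<forall>j<n. i \<noteq> j \<longrightarrow> u i \<le> s j \<or> u j \<le> s i"
  proof (intro allI impI)
    fix i j
    assume "i < n" "j < n" "i \<noteq> j"
    then have "h i \<noteq> h j"
      using h by (auto simp: bij_betw_def inj_on_def n_def)
    then have "interior (snd (h i)) \<inter> interior (snd (h j)) = {}"
      using tagged_partial_division_ofD(5)[OF q, of "fst (h i)" "snd (h i)" "fst (h j)" "snd (h j)"]
        hq' \<open>i < n\<close> \<open>j < n\<close> by (auto simp: q'_def)
    moreover have "snd (h i) = {s i..u i}" "snd (h j) = {s j..u j}"
      using mem(1)[OF hq(1)] \<open>i < n\<close> \<open>j < n\<close> by (simp_all add: s_def u_def)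
    ultimately show "u i \<le> s j \<or> u j \<le> s i"
      using hq(2)[OF \<open>i < n\<close>] hq(2)[OF \<open>j < n\<close>] by (auto simp: min_def max_def split: if_splits)
  qed
  moreover have "(\<Sum>i<n. F (s i) (u i)) = (\<Sum>(t, K)\<in>q. F (Inf K) (Sup K))"
    if "\<forall>c. F c c = 0" for F :: "real \<Rightarrow> real \<Rightarrow> real"
  proof -
    have "(\<Sum>i<n. F (s i) (u i)) = (\<Sum>p\<in>q'. F (Inf (snd p)) (Sup (snd p)))"
      using sum.reindex_bij_betw[OF h, of "\<lambda>p. F (Inf (snd p)) (Sup (snd p))"]
      by (simp add: n_def s_def u_def)
    also have "\<dots> = (\<Sum>p\<in>q. F (Inf (snd p)) (Sup (snd p)))"
    proof (rule sum.mono_neutral_left)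
      show "finite q"
        using tagged_partial_division_ofD(1)[OF q] .
      show "\<forall>p\<in>q - q'. F (Inf (snd p)) (Sup (snd p)) = 0"
        using mem(3) that by (fastforce simp: q'_def)
    qed (auto simp: q'_def)
    finally show ?thesis
      by (simp add: case_prod_unfold)
  qed
  ultimately show ?thesis
    by blast
qed

lemma abs_continuous_on_interval_tagged_partial_division:
  fixes g :: "real \<Rightarrow> 'a::real_normed_vector"
  assumes "abs_continuous_on_interval g a b" "\<epsilon> > 0"
  obtains \<delta> where "\<delta> > 0"
    "\<And>q. q tagged_partial_division_of {a..b} \<Longrightarrow> (\<Sum>(t, K)\<in>q. measure lborel K) < \<delta> \<Longrightarrow>
        (\<Sum>(t, K)\<in>q. norm (g (Sup K) - g (Inf K))) < \<epsilon>"
proof -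
  obtain \<delta> where "\<delta> > 0" and \<delta>: "\<And>(n::nat) s u. \<forall>i<n. a \<le> s i \<and> s i \<le> u i \<and> u i \<le> b \<Longrightarrow>
      \<forall>i<n. \<forall>j<n. i \<noteq> j \<longrightarrow> u i \<le> s j \<or> u j \<le> s i \<Longrightarrow>
      (\<Sum>i<n. u i - s i) < \<delta> \<Longrightarrow> (\<Sum>i<n. norm (g (u i) - g (s i))) < \<epsilon>"
    using abs_continuous_on_intervalD[OF assms] by blast
  have "(\<Sum>(t, K)\<in>q. norm (g (Sup K) - g (Inf K))) < \<epsilon>"
    if q: "q tagged_partial_division_of {a..b}" and short: "(\<Sum>(t, K)\<in>q. measure lborel K) < \<delta>" for q
  proof -
    obtain n :: nat and s u where intervals: "\<forall>i<n. a \<le> s i \<and> s i \<le> u i \<and> u i \<le> b"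
      and disjoint: "\<forall>i<n. \<forall>j<n. i \<noteq> j \<longrightarrow> u i \<le> s j \<or> u j \<le> s i"
      and sums: "\<forall>F :: real \<Rightarrow> real \<Rightarrow> real. (\<forall>c. F c c = 0) \<longrightarrow>
        (\<Sum>i<n. F (s i) (u i)) = (\<Sum>(t, K)\<in>q. F (Inf K) (Sup K))"
      using tagged_partial_division_enumeration[OF q] by blast
    have "(\<Sum>(t, K)\<in>q. Sup K - Inf K) = (\<Sum>(t, K)\<in>q. measure lborel K)"
    proof (rule sum.cong[OF refl], clarify)
      fix t K
      assume "(t, K) \<in> q"
      note mem = tagged_partial_division_real_memD[OF q this]
      show "Sup K - Inf K = measure lborel K"
        using content_real[of "Inf K" "Sup K", folded mem(1)] mem(3,4) by linarith
    qed
    then have "(\<Sum>i<n. u i - s i) < \<delta>"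
      using sums[rule_format, of "\<lambda>c d. d - c"] short by simp
    then have "(\<Sum>i<n. norm (g (u i) - g (s i))) < \<epsilon>"
      by (rule \<delta>[OF intervals disjoint])
    then show ?thesis
      using sums[rule_format, of "\<lambda>c d. norm (g d - g c)"] by simp
  qed
  then show thesis
    by (rule that[OF \<open>\<delta> > 0\<close>])
qed

lemma null_sets_outer_open:
  fixes N :: "'a::euclidean_space set"
  assumes "N \<in> null_sets lebesgue" "e > 0"
  obtains U where "open U" "N \<subseteq> U" "U \<in> lmeasurable" "measure lebesgue U < e"
proof -
  obtain U where "open U" "N \<subseteq> U" and U: "U - N \<in> lmeasurable" "emeasure lebesgue (U - N) < ennreal e"
    using sets_lebesgue_outer_open[OF null_setsD2[OF assms(1)] assms(2)] by blast
  have "U = (U - N) \<union> N"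
    using \<open>N \<subseteq> U\<close> by blast
  then have "U \<in> lmeasurable"
    using fmeasurable.Un[OF U(1) fmeasurableI_null_sets[OF assms(1)]] by simp
  moreover have "measure lebesgue U = measure lebesgue (U - N)"
    using \<open>U \<in> lmeasurable\<close> assms(1) by (simp add: measure_Diff_null_set)
  moreover have "measure lebesgue (U - N) < e"
    using U emeasure_eq_measure2[OF U(1)] assms(2) by (simp add: ennreal_less_iff)
  ultimately show thesis
    using that \<open>open U\<close> \<open>N \<subseteq> U\<close> by simp
qed

lemma tagged_partial_division_content_le_measure:
  fixes U :: "'a::euclidean_space set"
  assumes q: "q tagged_partial_division_of S" and "U \<in> lmeasurable"
    and inside: "\<And>t K. (t, K) \<in> q \<Longrightarrow> K \<subseteq> U"
  shows "(\<Sum>(t, K)\<in>q. measure lborel K) \<le> measure lebesgue U"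
proof -
  have division: "snd ` q division_of \<Union>(snd ` q)"
    by (rule partial_division_of_tagged_division[OF q])
  have "(\<Sum>(t, K)\<in>q. measure lborel K) = (\<Sum>K\<in>snd ` q. measure lborel K)"
    by (rule sum.over_tagged_division_lemma[OF tagged_partial_division_of_Union_self[OF q]])
      (metis content_eq_0_interior interior_cbox)
  also have "\<dots> = (\<Sum>K\<in>snd ` q. measure lebesgue K)"
  proof (rule sum.cong[OF refl])
    fix K
    assume "K \<in> snd ` q"
    then obtain c d where "K = cbox c d"
      using tagged_partial_division_ofD(4)[OF q] by fastforce
    then show "measure lborel K = measure lebesgue K"
      by simp
  qed
  also have "\<dots> = measure lebesgue (\<Union>(snd ` q))"
    by (rule content_division[OF division])
  also have "\<dots> \<le> measure lebesgue U"
    using lmeasurable_division[OF division] \<open>U \<in> lmeasurable\<close>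
    by (intro measure_mono_fmeasurable) (auto dest!: inside)
  finally show ?thesis .
qed

lemma has_real_derivative_nonpos_increment:
  fixes g :: "real \<Rightarrow> real"
  assumes "(g has_real_derivative d) (at t within S)" "d \<le> 0" "\<epsilon> > 0"
  obtains r where "r > 0"
    "\<And>u v. u \<in> S \<Longrightarrow> v \<in> S \<Longrightarrow> u \<le> t \<Longrightarrow> t \<le> v \<Longrightarrow> dist u t < r \<Longrightarrow> dist v t < r \<Longrightarrow>
      g v - g u \<le> \<epsilon> * (v - u)"
proof -
  have "((\<lambda>y. (g y - g t) / (y - t)) \<longlongrightarrow> d) (at t within S)"
    using assms(1) by (simp add: has_field_derivative_iff)
  then have "eventually (\<lambda>y. dist ((g y - g t) / (y - t)) d < \<epsilon>) (at t within S)"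
    using assms(3) by (rule tendstoD)
  then obtain r where "r > 0"
    and r: "\<And>y. y \<in> S \<Longrightarrow> y \<noteq> t \<Longrightarrow> dist y t < r \<Longrightarrow> dist ((g y - g t) / (y - t)) d < \<epsilon>"
    unfolding eventually_at by blast
  have slope: "(g y - g t) / (y - t) < \<epsilon>" if "y \<in> S" "y \<noteq> t" "dist y t < r" for y
  proof -
    from r[OF that] have "(g y - g t) / (y - t) - d < \<epsilon>"
      by (simp add: dist_real_def abs_less_iff)
    then show ?thesis
      using assms(2) by linarith
  qed
  have right: "g v - g t \<le> \<epsilon> * (v - t)" if "v \<in> S" "t \<le> v" "dist v t < r" for v
  proof (cases "v = t")
    case False
    then have "(g v - g t) / (v - t) < \<epsilon>" "v - t > 0"
      using that slope by auto
    then show ?thesis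
      by (simp add: pos_divide_less_eq)
  qed simp
  have left: "g t - g u \<le> \<epsilon> * (t - u)" if "u \<in> S" "u \<le> t" "dist u t < r" for u
  proof (cases "u = t")
    case False
    have "(g t - g u) / (t - u) = (g u - g t) / (u - t)"
      by (metis minus_diff_eq minus_divide_divide)
    then have "(g t - g u) / (t - u) < \<epsilon>" "t - u > 0"
      using that slope[of u] False by simp_all
    then show ?thesis
      by (simp add: pos_divide_less_eq)
  qed simp
  show thesis
  proof (rule that[OF \<open>r > 0\<close>])
    fix u v
    assume "u \<in> S" "v \<in> S" "u \<le> t" "t \<le> v" "dist u t < r" "dist v t < r"
    then have "g v - g t \<le> \<epsilon> * (v - t)" "g t - g u \<le> \<epsilon> * (t - u)"
      using right left by blast+
    moreover have "\<epsilon> * (v - u) = \<epsilon> * (v - t) + \<epsilon> * (t - u)"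
      by (simp add: algebra_simps)
    ultimately show "g v - g u \<le> \<epsilon> * (v - u)"
      by linarith
  qed
qed

lemma nonpos_derivative_gauge:
  fixes g :: "real \<Rightarrow> real"
  assumes "open U" "E \<subseteq> U" "{a, b} \<subseteq> E" "\<epsilon> > 0"
    and deriv: "\<And>t. t \<in> {a<..<b} - E \<Longrightarrow> \<exists>d\<le>0. (g has_real_derivative d) (at t within {a..b})"
  obtains \<gamma> where "\<And>t. \<gamma> t > 0" "\<And>t. t \<in> E \<Longrightarrow> ball t (\<gamma> t) \<subseteq> U"
    "\<And>t u v. t \<notin> E \<Longrightarrow> u \<in> {a..b} \<Longrightarrow> v \<in> {a..b} \<Longrightarrow> u \<le> t \<Longrightarrow> t \<le> v \<Longrightarrow>
      dist u t < \<gamma> t \<Longrightarrow> dist v t < \<gamma> t \<Longrightarrow> g v - g u \<le> \<epsilon> * (v - u)"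
proof -
  have "\<forall>t. \<exists>r>0. (t \<in> E \<longrightarrow> ball t r \<subseteq> U) \<and>
      (t \<notin> E \<longrightarrow> (\<forall>u v. u \<in> {a..b} \<longrightarrow> v \<in> {a..b} \<longrightarrow> u \<le> t \<longrightarrow> t \<le> v \<longrightarrow>
         dist u t < r \<longrightarrow> dist v t < r \<longrightarrow> g v - g u \<le> \<epsilon> * (v - u)))"
  proof
    fix t
    consider "t \<in> E" | "t \<in> {a<..<b} - E" | "t \<notin> E" "t \<notin> {a..b}"
      using assms(3) by (cases "t \<in> E") (auto simp: less_le)
    then show "\<exists>r>0. (t \<in> E \<longrightarrow> ball t r \<subseteq> U) \<and>
      (t \<notin> E \<longrightarrow> (\<forall>u v. u \<in> {a..b} \<longrightarrow> v \<in> {a..b} \<longrightarrow> u \<le> t \<longrightarrow> t \<le> v \<longrightarrow>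
         dist u t < r \<longrightarrow> dist v t < r \<longrightarrow> g v - g u \<le> \<epsilon> * (v - u)))"
    proof cases
      case 1
      then show ?thesis
        using \<open>open U\<close> \<open>E \<subseteq> U\<close> open_contains_ball by blast
    next
      case 2
      then obtain d where "d \<le> 0" "(g has_real_derivative d) (at t within {a..b})"
        using deriv by blast
      then obtain r where r: "r > 0" "\<And>u v. u \<in> {a..b} \<Longrightarrow> v \<in> {a..b} \<Longrightarrow> u \<le> t \<Longrightarrow> t \<le> v \<Longrightarrow>
          dist u t < r \<Longrightarrow> dist v t < r \<Longrightarrow> g v - g u \<le> \<epsilon> * (v - u)"
        using has_real_derivative_nonpos_increment \<open>\<epsilon> > 0\<close> by blast
      have "\<forall>u v. u \<in> {a..b} \<longrightarrow> v \<in> {a..b} \<longrightarrow> u \<le> t \<longrightarrow> t \<le> v \<longrightarrow>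
          dist u t < r \<longrightarrow> dist v t < r \<longrightarrow> g v - g u \<le> \<epsilon> * (v - u)"
        using r(2) by blast
      then show ?thesis
        using r(1) 2 by (intro exI[of _ r]) simp
    next
      case 3
      then show ?thesis
        by (intro exI[of _ 1]) auto
    qed
  qed
  from choice[OF this] obtain \<gamma> where \<gamma>: "\<forall>t. \<gamma> t > 0 \<and> (t \<in> E \<longrightarrow> ball t (\<gamma> t) \<subseteq> U) \<and>
      (t \<notin> E \<longrightarrow> (\<forall>u v. u \<in> {a..b} \<longrightarrow> v \<in> {a..b} \<longrightarrow> u \<le> t \<longrightarrow> t \<le> v \<longrightarrow>
         dist u t < \<gamma> t \<longrightarrow> dist v t < \<gamma> t \<longrightarrow> g v - g u \<le> \<epsilon> * (v - u)))"
    by blast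
  show thesis
  proof (rule that)
    show "\<gamma> t > 0" "t \<in> E \<Longrightarrow> ball t (\<gamma> t) \<subseteq> U" for t
      using \<gamma> by blast+
    show "g v - g u \<le> \<epsilon> * (v - u)" if "t \<notin> E" "u \<in> {a..b}" "v \<in> {a..b}" "u \<le> t" "t \<le> v"
      "dist u t < \<gamma> t" "dist v t < \<gamma> t" for t u v
      using \<gamma> that by blast
  qed
qed

lemma fine_tagged_division_increment_bound:
  fixes g :: "real \<Rightarrow> real"
  assumes p: "p tagged_division_of {a..b}" and fine: "(\<lambda>t. ball t (\<gamma> t)) fine p"
    and "a \<le> b" "0 \<le> \<epsilon>"
    and increment: "\<And>t u v. t \<notin> E \<Longrightarrow> u \<in> {a..b} \<Longrightarrow> v \<in> {a..b} \<Longrightarrow> u \<le> t \<Longrightarrow> t \<le> v \<Longrightarrow>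
      dist u t < \<gamma> t \<Longrightarrow> dist v t < \<gamma> t \<Longrightarrow> g v - g u \<le> \<epsilon> * (v - u)"
  shows "(\<Sum>(t, K)\<in>{(t, K) \<in> p. t \<notin> E}. g (Sup K) - g (Inf K)) \<le> \<epsilon> * (b - a)"
proof -
  have partial: "p tagged_partial_division_of {a..b}"
    using p by (simp add: tagged_division_of_def)
  have "finite p"
    using p by blast
  have "(\<Sum>(t, K)\<in>{(t, K) \<in> p. t \<notin> E}. g (Sup K) - g (Inf K))
      \<le> (\<Sum>(t, K)\<in>{(t, K) \<in> p. t \<notin> E}. \<epsilon> * measure lborel K)"
  proof (rule sum_mono, clarify)
    fix t K
    assume "(t, K) \<in> p" "t \<notin> E"
    note mem = tagged_partial_division_real_memD[OF partial \<open>(t, K) \<in> p\<close>]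
    have "Inf K \<in> K" "Sup K \<in> K"
      using mem by (metis atLeastAtMost_iff order_refl order_trans)+
    moreover have "K \<subseteq> ball t (\<gamma> t)"
      using fine \<open>(t, K) \<in> p\<close> by (auto simp: fine_def)
    ultimately have "dist (Inf K) t < \<gamma> t" "dist (Sup K) t < \<gamma> t"
      by (metis mem_ball subsetD dist_commute)+
    then have "g (Sup K) - g (Inf K) \<le> \<epsilon> * (Sup K - Inf K)"
      using increment[OF \<open>t \<notin> E\<close>] mem by auto
    moreover have "measure lborel K = Sup K - Inf K"
      using content_real[of "Inf K" "Sup K", folded mem(1)] mem(3,4) by linarith
    ultimately show "g (Sup K) - g (Inf K) \<le> \<epsilon> * measure lborel K"
      by simp
  qed
  also have "\<dots> \<le> (\<Sum>(t, K)\<in>p. \<epsilon> * measure lborel K)"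
    using \<open>finite p\<close> \<open>0 \<le> \<epsilon>\<close> by (intro sum_mono2) auto
  also have "\<dots> = \<epsilon> * (b - a)"
    using additive_content_tagged_division[of p a b] p \<open>a \<le> b\<close>
    by (simp add: case_prod_unfold flip: sum_distrib_left)
  finally show ?thesis .
qed

lemma abs_continuous_on_interval_nonpos_derivative_estimate:
  fixes g :: "real \<Rightarrow> real"
  assumes "a \<le> b" and ac: "abs_continuous_on_interval g a b" and "N \<in> null_sets lebesgue" "\<epsilon> > 0"
    and deriv: "\<And>t. t \<in> {a<..<b} - N \<Longrightarrow> \<exists>d\<le>0. (g has_real_derivative d) (at t within {a..b})"
  shows "g b - g a \<le> \<epsilon> * (b - a) + \<epsilon>"
proof -
  obtain \<delta> where "\<delta> > 0" and \<delta>: "\<And>q. q tagged_partial_division_of {a..b} \<Longrightarrow>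
      (\<Sum>(t, K)\<in>q. measure lborel K) < \<delta> \<Longrightarrow> (\<Sum>(t, K)\<in>q. norm (g (Sup K) - g (Inf K))) < \<epsilon>"
    using abs_continuous_on_interval_tagged_partial_division[OF ac \<open>\<epsilon> > 0\<close>] by blast
  \<comment> \<open>Tags in \<open>E\<close> get intervals inside \<open>U\<close>, whose total length is below \<open>\<delta>\<close>; at all other
    tags the derivative controls the increments of \<open>g\<close>.\<close>
  define E where "E = N \<union> {a, b}"
  have "E \<in> null_sets lebesgue"
    using assms(3) null_sets_completionI[OF finite_imp_null_set_lborel[of "{a, b}"]] by (auto simp: E_def)
  then obtain U where "open U" "E \<subseteq> U" "U \<in> lmeasurable" "measure lebesgue U < \<delta>"
    using null_sets_outer_open \<open>\<delta> > 0\<close> by blast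
  moreover have "\<exists>d\<le>0. (g has_real_derivative d) (at t within {a..b})" if "t \<in> {a<..<b} - E" for t
    using deriv that by (simp add: E_def)
  ultimately obtain \<gamma> where \<gamma>: "\<And>t. \<gamma> t > 0" "\<And>t. t \<in> E \<Longrightarrow> ball t (\<gamma> t) \<subseteq> U"
    and increment: "\<And>t u v. t \<notin> E \<Longrightarrow> u \<in> {a..b} \<Longrightarrow> v \<in> {a..b} \<Longrightarrow> u \<le> t \<Longrightarrow> t \<le> v \<Longrightarrow>
      dist u t < \<gamma> t \<Longrightarrow> dist v t < \<gamma> t \<Longrightarrow> g v - g u \<le> \<epsilon> * (v - u)"
    using nonpos_derivative_gauge[of U E a b \<epsilon> g] \<open>\<epsilon> > 0\<close> by (auto simp: E_def)
  obtain p where p: "p tagged_division_of {a..b}" and fine: "(\<lambda>t. ball t (\<gamma> t)) fine p"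
    using fine_division_exists_real[OF gauge_ball_dependent] \<gamma>(1) by blast
  define P where "P = {(t, K) \<in> p. t \<in> E}"
  have "finite p"
    using p by blast
  have "g b - g a = (\<Sum>(t, K)\<in>p. g (Sup K) - g (Inf K))"
    using additive_tagged_division_1[OF \<open>a \<le> b\<close> p, of g] by simp
  also have "\<dots> = (\<Sum>(t, K)\<in>{(t, K) \<in> p. t \<notin> E}. g (Sup K) - g (Inf K)) + (\<Sum>(t, K)\<in>P. g (Sup K) - g (Inf K))"
    using \<open>finite p\<close> by (subst sum.subset_diff[of P]) (auto simp: P_def intro!: sum.cong)
  finally have split: "g b - g a = (\<Sum>(t, K)\<in>{(t, K) \<in> p. t \<notin> E}. g (Sup K) - g (Inf K))
      + (\<Sum>(t, K)\<in>P. g (Sup K) - g (Inf K))" .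
  have "P tagged_partial_division_of {a..b}"
    using p unfolding tagged_division_of_def by (rule tagged_partial_division_subset[OF conjunct1]) (auto simp: P_def)
  moreover have "(\<Sum>(t, K)\<in>P. measure lborel K) \<le> measure lebesgue U"
  proof (rule tagged_partial_division_content_le_measure[OF \<open>P tagged_partial_division_of {a..b}\<close> \<open>U \<in> lmeasurable\<close>])
    fix t K
    assume "(t, K) \<in> P"
    then have "(t, K) \<in> p" "t \<in> E"
      by (auto simp: P_def)
    then have "K \<subseteq> ball t (\<gamma> t)"
      using fine by (auto simp: fine_def)
    then show "K \<subseteq> U"
      using \<gamma>(2)[OF \<open>t \<in> E\<close>] by blast
  qed
  ultimately have "(\<Sum>(t, K)\<in>P. norm (g (Sup K) - g (Inf K))) < \<epsilon>"
    using \<delta> \<open>measure lebesgue U < \<delta>\<close> by fastforce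
  moreover have "(\<Sum>(t, K)\<in>P. g (Sup K) - g (Inf K)) \<le> (\<Sum>(t, K)\<in>P. norm (g (Sup K) - g (Inf K)))"
    by (rule sum_mono) auto
  moreover have "(\<Sum>(t, K)\<in>{(t, K) \<in> p. t \<notin> E}. g (Sup K) - g (Inf K)) \<le> \<epsilon> * (b - a)"
    using fine_tagged_division_increment_bound[OF p fine \<open>a \<le> b\<close> _ increment] \<open>\<epsilon> > 0\<close> by simp
  ultimately show ?thesis
    using split by linarith
qed

lemma abs_continuous_on_interval_nonincreasing:
  fixes g :: "real \<Rightarrow> real"
  assumes "a \<le> b" and ac: "abs_continuous_on_interval g a b" and "N \<in> null_sets lebesgue"
    and deriv: "\<And>t. t \<in> {a<..<b} - N \<Longrightarrow> \<exists>d\<le>0. (g has_real_derivative d) (at t within {a..b})"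
  shows "g b \<le> g a"
proof (rule field_le_epsilon)
  fix e :: real
  assume "e > 0"
  have "b - a + 1 > 0"
    using \<open>a \<le> b\<close> by simp
  then have "g b - g a \<le> e / (b - a + 1) * (b - a) + e / (b - a + 1)"
    using \<open>e > 0\<close> abs_continuous_on_interval_nonpos_derivative_estimate[OF assms(1-3) _ deriv,
        of "e / (b - a + 1)"] by simp
  also have "\<dots> = e / (b - a + 1) * (b - a + 1)"
    by (simp add: distrib_left)
  also have "\<dots> = e"
    using \<open>b - a + 1 > 0\<close> by simp
  finally show "g b \<le> g a + e"
    by simp
qed

lemma abs_continuous_on_interval_difference_quotient:
  fixes \<phi> :: "real \<Rightarrow> 'a::euclidean_space"
  assumes "a < b" "abs_continuous_on_interval \<phi> a b" "N \<in> null_sets lebesgue"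
    and "convex S" "closed S"
    and deriv: "\<And>t. t \<in> {a<..<b} - N \<Longrightarrow> \<exists>v\<in>S. (\<phi> has_vector_derivative v) (at t within {a..b})"
  shows "(\<phi> b - \<phi> a) /\<^sub>R (b - a) \<in> S"
proof (rule ccontr)
  assume "(\<phi> b - \<phi> a) /\<^sub>R (b - a) \<notin> S"
  then obtain p \<beta> where sep: "p \<bullet> ((\<phi> b - \<phi> a) /\<^sub>R (b - a)) < \<beta>" "\<And>w. w \<in> S \<Longrightarrow> \<beta> < p \<bullet> w"
    using separating_hyperplane_closed_point[OF assms(4,5)] by blast
  define g where "g s = \<beta> * s - p \<bullet> \<phi> s" for s
  have "abs_continuous_on_interval g a b"
  proof (rule abs_continuous_on_interval_dominated[OF assms(2) abs_ge_zero norm_ge_zero])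
    fix s u
    assume "a \<le> s" "s \<le> u" "u \<le> b"
    have "g u - g s = \<beta> * (u - s) - p \<bullet> (\<phi> u - \<phi> s)"
      by (simp add: g_def algebra_simps inner_diff_right)
    also have "norm \<dots> \<le> \<bar>\<beta>\<bar> * (u - s) + norm p * norm (\<phi> u - \<phi> s)"
      using \<open>s \<le> u\<close> abs_triangle_ineq4[of "\<beta> * (u - s)" "p \<bullet> (\<phi> u - \<phi> s)"]
        Cauchy_Schwarz_ineq2[of p "\<phi> u - \<phi> s"] by (simp add: abs_mult)
    finally show "norm (g u - g s) \<le> \<bar>\<beta>\<bar> * (u - s) + norm p * norm (\<phi> u - \<phi> s)" .
  qed
  moreover have "\<exists>d\<le>0. (g has_real_derivative d) (at t within {a..b})" if t: "t \<in> {a<..<b} - N" for t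
  proof -
    obtain v where "v \<in> S" and v: "(\<phi> has_vector_derivative v) (at t within {a..b})"
      using deriv[OF t] by blast
    have "((\<lambda>s. p \<bullet> \<phi> s) has_real_derivative p \<bullet> v) (at t within {a..b})"
      using bounded_linear.has_vector_derivative[OF bounded_linear_inner_right v]
      by (simp add: has_real_derivative_iff_has_vector_derivative)
    then have "(g has_real_derivative \<beta> - p \<bullet> v) (at t within {a..b})"
      unfolding g_def by (auto intro!: derivative_eq_intros)
    moreover have "\<beta> - p \<bullet> v \<le> 0"
      using sep(2)[OF \<open>v \<in> S\<close>] by simp
    ultimately show ?thesis
      by blast
  qed
  ultimately have "g b \<le> g a"
    by (intro abs_continuous_on_interval_nonincreasing[OF less_imp_le[OF assms(1)] _ assms(3)])
  then have "\<beta> * (b - a) \<le> p \<bullet> (\<phi> b - \<phi> a)"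
    by (simp add: g_def algebra_simps inner_diff_right)
  moreover have "p \<bullet> ((\<phi> b - \<phi> a) /\<^sub>R (b - a)) = p \<bullet> (\<phi> b - \<phi> a) / (b - a)"
    by (simp only: inner_scaleR_right divide_inverse_commute)
  ultimately have "\<beta> \<le> p \<bullet> ((\<phi> b - \<phi> a) /\<^sub>R (b - a))"
    using assms(1) by (simp add: pos_le_divide_eq)
  with sep(1) show False
    by simp
qed

section \<open>Initial speeds\<close>

lemma initial_speeds_subset_contingent_cone:
  assumes "T > 0" and "\<And>t. t \<in> D \<Longrightarrow> 0 < t \<Longrightarrow> t \<le> T \<Longrightarrow> \<phi> t \<in> S"
  shows "initial_speeds \<phi> D \<subseteq> contingent_cone S (\<phi> 0)"
proof
  fix v
  assume "v \<in> initial_speeds \<phi> D"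
  then obtain t where t: "\<forall>i. t i > 0 \<and> t i \<in> D" "t \<longlonglongrightarrow> 0"
    and quotient: "(\<lambda>i. (\<phi> (t i) - \<phi> 0) /\<^sub>R t i) \<longlonglongrightarrow> v"
    unfolding initial_speeds_def by blast
  have "eventually (\<lambda>i. t i < T) sequentially"
    using t(2) assms(1) by (rule order_tendstoD)
  then have "eventually (\<lambda>i. 0 < t i \<and> \<phi> 0 + t i *\<^sub>R ((\<phi> (t i) - \<phi> 0) /\<^sub>R t i) \<in> S) sequentially"
  proof eventually_elim
    case (elim i)
    have "0 < t i" "t i \<in> D"
      using t(1) by auto
    then show ?case
      using elim assms(2)[of "t i"] by simp
  qed
  then show "v \<in> contingent_cone S (\<phi> 0)"
    by (rule contingent_coneI_eventually[OF t(2) quotient])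
qed

lemma solution_difference_quotient:
  fixes \<phi> :: "real \<Rightarrow> 'a::euclidean_space"
  assumes sol: "is_solution C F \<phi> D" and "0 < t" "{0..t} \<subseteq> D" "convex S" "closed S"
    and velocities: "\<And>s. s \<in> {0<..<t} \<Longrightarrow> F (\<phi> s) \<subseteq> S"
  shows "(\<phi> t - \<phi> 0) /\<^sub>R t \<in> S"
proof -
  have "AE s in lebesgue. s \<in> D \<longrightarrow> (\<exists>w. (\<phi> has_vector_derivative w) (at s within D) \<and> w \<in> F (\<phi> s))"
    using sol by (simp add: is_solution_def)
  then obtain N where N: "{s \<in> space lebesgue. \<not> (s \<in> D \<longrightarrow>
      (\<exists>w. (\<phi> has_vector_derivative w) (at s within D) \<and> w \<in> F (\<phi> s)))} \<subseteq> N"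
    and "emeasure lebesgue N = 0" "N \<in> sets lebesgue"
    by (rule AE_E)
  then have "N \<in> null_sets lebesgue"
    by (simp add: null_setsI)
  have "(\<phi> t - \<phi> 0) /\<^sub>R (t - 0) \<in> S"
  proof (rule abs_continuous_on_interval_difference_quotient[OF \<open>0 < t\<close> _ \<open>N \<in> null_sets lebesgue\<close>
        \<open>convex S\<close> \<open>closed S\<close>])
    show "abs_continuous_on_interval \<phi> 0 t"
      using sol \<open>{0..t} \<subseteq> D\<close> \<open>0 < t\<close> by (auto simp: is_solution_def loc_abs_continuous_on_def)
    fix s
    assume s: "s \<in> {0<..<t} - N"
    then have "s \<in> D"
      using \<open>{0..t} \<subseteq> D\<close> by auto
    then obtain w where w: "(\<phi> has_vector_derivative w) (at s within D)" "w \<in> F (\<phi> s)"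
      using N s by auto
    have "(\<phi> has_vector_derivative w) (at s within {0..t})"
      using w(1) \<open>{0..t} \<subseteq> D\<close> by (rule has_vector_derivative_within_subset)
    then show "\<exists>w\<in>S. (\<phi> has_vector_derivative w) (at s within {0..t})"
      using velocities s w(2) by blast
  qed
  then show ?thesis
    by simp
qed

lemma initial_speeds_subset_closed_convex:
  fixes \<phi> :: "real \<Rightarrow> 'a::euclidean_space"
  assumes sol: "is_solution C F \<phi> D" and "T > 0" "{0..T} \<subseteq> D"
    and "convex S" "closed S" "\<eta> > 0" and near: "\<And>y. y \<in> ball (\<phi> 0) \<eta> \<Longrightarrow> F y \<subseteq> S"
  shows "initial_speeds \<phi> D \<subseteq> S"
proof
  fix v
  assume v: "v \<in> initial_speeds \<phi> D"
  have "continuous_on {0..T} \<phi>"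
    using sol \<open>{0..T} \<subseteq> D\<close> \<open>T > 0\<close>
    by (intro abs_continuous_on_interval_imp_continuous_on) (auto simp: is_solution_def loc_abs_continuous_on_def)
  moreover have "0 \<in> {0..T}"
    using \<open>T > 0\<close> by simp
  ultimately obtain \<tau> where "\<tau> > 0" and \<tau>: "\<And>t. t \<in> {0..T} \<Longrightarrow> dist t 0 < \<tau> \<Longrightarrow> dist (\<phi> t) (\<phi> 0) < \<eta>"
    using \<open>\<eta> > 0\<close> unfolding continuous_on_iff by blast
  define \<tau>' where "\<tau>' = min T (\<tau> / 2)"
  have quotient: "(\<phi> t - \<phi> 0) /\<^sub>R t \<in> S" if "0 < t" "t \<le> \<tau>'" for t
  proof (rule solution_difference_quotient[OF sol \<open>0 < t\<close> _ \<open>convex S\<close> \<open>closed S\<close>])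
    show "{0..t} \<subseteq> D"
      using that \<open>{0..T} \<subseteq> D\<close> by (auto simp: \<tau>'_def)
    show "F (\<phi> s) \<subseteq> S" if "s \<in> {0<..<t}" for s
      using near \<tau>[of s] that \<open>0 < t\<close> \<open>t \<le> \<tau>'\<close> \<open>\<tau> > 0\<close> by (auto simp: \<tau>'_def dist_commute)
  qed
  obtain t where t: "\<forall>i. t i > 0 \<and> t i \<in> D" "t \<longlonglongrightarrow> 0"
    and limit: "(\<lambda>i. (\<phi> (t i) - \<phi> 0) /\<^sub>R t i) \<longlonglongrightarrow> v"
    using v unfolding initial_speeds_def by blast
  have "\<tau>' > 0"
    using \<open>T > 0\<close> \<open>\<tau> > 0\<close> by (simp add: \<tau>'_def)
  then have "eventually (\<lambda>i. t i < \<tau>') sequentially"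
    by (rule order_tendstoD(2)[OF t(2)])
  then have "eventually (\<lambda>i. (\<phi> (t i) - \<phi> 0) /\<^sub>R t i \<in> S) sequentially"
    by (rule eventually_mono) (use quotient t(1) in auto)
  then show "v \<in> S"
    using Lim_in_closed_set[OF \<open>closed S\<close> _ trivial_limit_sequentially limit] by blast
qed

lemma initial_speeds_subset_values:
  fixes F :: "'a::euclidean_space \<Rightarrow> 'a set"
  assumes SA: "standing_assumption C F" and sol: "is_solution C F \<phi> D"
    and "T > 0" "{0..T} \<subseteq> D"
  shows "initial_speeds \<phi> D \<subseteq> F (\<phi> 0)"
proof
  fix v
  assume v: "v \<in> initial_speeds \<phi> D"
  have "0 \<in> D"
    using \<open>{0..T} \<subseteq> D\<close> \<open>T > 0\<close> by auto
  then have "\<phi> 0 \<in> C"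
    using sol by (simp add: is_solution_def)
  then have F0: "convex (F (\<phi> 0))" "closed (F (\<phi> 0))" "sv_usc_at F (\<phi> 0)"
    using SA by (auto simp: standing_assumption_def sv_continuous_def sv_dom_def)
  show "v \<in> F (\<phi> 0)"
  proof (rule ccontr)
    assume "v \<notin> F (\<phi> 0)"
    then obtain p \<beta> where "p \<bullet> v < \<beta>" and separating: "\<And>w. w \<in> F (\<phi> 0) \<Longrightarrow> \<beta> < p \<bullet> w"
      using separating_hyperplane_closed_point[OF F0(1,2)] by blast
    then have "open {w. \<beta> < p \<bullet> w}" "F (\<phi> 0) \<subseteq> {w. \<beta> < p \<bullet> w}"
      using open_halfspace_gt[of \<beta> p] by auto
    then have "\<exists>\<eta>>0. \<forall>y\<in>ball (\<phi> 0) \<eta>. F y \<subseteq> {w. \<beta> < p \<bullet> w}"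
      using F0(3) unfolding sv_usc_at_def by blast
    then obtain \<eta> where "\<eta> > 0" and \<eta>: "\<And>y. y \<in> ball (\<phi> 0) \<eta> \<Longrightarrow> F y \<subseteq> {w. \<beta> \<le> p \<bullet> w}"
      by fastforce
    have "initial_speeds \<phi> D \<subseteq> {w. \<beta> \<le> p \<bullet> w}"
      using initial_speeds_subset_closed_convex[OF sol \<open>T > 0\<close> \<open>{0..T} \<subseteq> D\<close> convex_halfspace_ge
          closed_halfspace_ge \<open>\<eta> > 0\<close> \<eta>] .
    with v \<open>p \<bullet> v < \<beta>\<close> show False
      by auto
  qed
qed

lemma closure_initial_speeds_subset:
  assumes SA: "standing_assumption C F" and A1: "assumption1 C F K"
    and sol: "is_solution C F \<phi> D" and "\<phi> 0 = x" "x \<in> bad_points C K"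
    and "leaves_immediately C K \<phi> D"
  shows "closure (initial_speeds \<phi> D) \<subseteq> F x \<inter> contingent_cone (frontier K) x \<inter> contingent_cone C x"
proof -
  obtain T where "T > 0" "{0<..T} \<subseteq> D" and leaves: "\<phi> ` {0<..T} \<subseteq> C - K"
    using assms(6) unfolding leaves_immediately_def by blast
  then have "0 \<in> D"
    using sol by (auto simp: is_solution_def solution_domain_def)
  then have "{0..T} \<subseteq> D"
    using \<open>{0<..T} \<subseteq> D\<close> by (auto simp: less_eq_real_def)
  have "x \<in> C"
    using \<open>0 \<in> D\<close> sol \<open>\<phi> 0 = x\<close> by (auto simp: is_solution_def)
  have "initial_speeds \<phi> D \<subseteq> F x"
    using initial_speeds_subset_values[OF SA sol \<open>T > 0\<close> \<open>{0..T} \<subseteq> D\<close>] \<open>\<phi> 0 = x\<close> by simp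
  moreover have "F x \<subseteq> contingent_cone K x"
    using A1 \<open>x \<in> bad_points C K\<close> by (simp add: assumption1_def)
  moreover have "initial_speeds \<phi> D \<subseteq> contingent_cone (- K) x"
  proof -
    have "\<phi> t \<in> - K" if "t \<in> D" "0 < t" "t \<le> T" for t
      using leaves that by (auto simp: image_subset_iff)
    from initial_speeds_subset_contingent_cone[where D = D and \<phi> = \<phi> and S = "- K", OF \<open>T > 0\<close> this] show ?thesis
      using \<open>\<phi> 0 = x\<close> by simp
  qed
  moreover have "initial_speeds \<phi> D \<subseteq> contingent_cone C x"
  proof -
    have "\<phi> t \<in> C" if "t \<in> D" for t
      using sol that by (simp add: is_solution_def)
    from initial_speeds_subset_contingent_cone[where D = D and \<phi> = \<phi> and S = C, OF \<open>T > 0\<close> this] show ?thesis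
      using \<open>\<phi> 0 = x\<close> by simp
  qed
  ultimately have "initial_speeds \<phi> D \<subseteq> F x \<inter> contingent_cone (frontier K) x \<inter> contingent_cone C x"
    using contingent_cone_Int_compl_subset_frontier[of K x] by blast
  moreover have "closed (F x \<inter> contingent_cone (frontier K) x \<inter> contingent_cone C x)"
    using SA \<open>x \<in> C\<close> by (intro closed_Int closed_contingent_cone) (auto simp: standing_assumption_def)
  ultimately show ?thesis
    by (rule closure_minimal)
qed

lemma tangent_cones_at_bad_point:
  fixes C K :: "'a::euclidean_space set" and F :: "'a \<Rightarrow> 'a set"
  assumes "closed C" "assumption2 C F K" "assumption3 C K" "x \<in> bad_points C K"
  shows "F x \<inter> contingent_cone (frontier K) x \<inter> contingent_cone C x \<subseteq>
           contingent_cone (frontier K \<inter> C) x - contingent_cone (frontier K - interior C) x"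
proof
  fix v
  assume v: "v \<in> F x \<inter> contingent_cone (frontier K) x \<inter> contingent_cone C x"
  have derivable: "contingent_cone (frontier K) x = adjacent_cone (frontier K) x"
      "contingent_cone C x = adjacent_cone C x"
    and "\<exists>N c \<alpha>. open N \<and> x \<in> N \<and> c > 0 \<and> 0 \<le> \<alpha> \<and> \<alpha> < 1 \<and>
        (\<forall>x1\<in>(frontier K - C) \<inter> N. \<forall>x2\<in>(frontier C - frontier K) \<inter> N.
           \<exists>v1\<in>contingent_cone (frontier K) x1. \<exists>v2\<in>contingent_cone C x2.
             norm (v1, v2) \<le> c * norm (x1 - x2) \<and> norm ((x2 - x1) - (v1 - v2)) \<le> \<alpha> * norm (x1 - x2))"
    using assms(3,4) unfolding assumption3_def by blast+
  then obtain N c \<alpha> where "open N" "x \<in> N" "c > 0" "\<alpha> < 1"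
    and transversal: "\<forall>x1\<in>(frontier K - C) \<inter> N. \<forall>x2\<in>(frontier C - frontier K) \<inter> N.
           \<exists>v1\<in>contingent_cone (frontier K) x1. \<exists>v2\<in>contingent_cone C x2.
             norm (v1, v2) \<le> c * norm (x1 - x2) \<and> norm ((x2 - x1) - (v1 - v2)) \<le> \<alpha> * norm (x1 - x2)"
    by blast
  have regular: "locally_linearly_regular A C x"
    if "closed A" "A \<subseteq> frontier K" "frontier K - C \<subseteq> A" "frontier K \<inter> frontier C \<subseteq> A" for A
    using locally_linearly_regularI[OF that(1) \<open>closed C\<close> that(2-4) \<open>open N\<close> \<open>x \<in> N\<close> \<open>c > 0\<close> \<open>\<alpha> < 1\<close>
        transversal] .
  have "locally_linearly_regular (frontier K) C x"
    by (rule regular) auto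
  then have inside: "v \<in> contingent_cone (frontier K \<inter> C) x"
    using adjacent_contingent_subset_contingent_Int derivable(1) v by blast
  have "locally_linearly_regular (frontier K - interior C) C x"
    using interior_subset by (intro regular) (auto simp: frontier_def)
  have "v \<notin> contingent_cone (frontier K - interior C) x"
  proof
    assume "v \<in> contingent_cone (frontier K - interior C) x"
    then have "v \<in> contingent_cone ((frontier K - interior C) \<inter> C) x"
      using contingent_adjacent_subset_contingent_Int[OF \<open>locally_linearly_regular (frontier K - interior C) C x\<close>]
        derivable(2) v by blast
    moreover have "(frontier K - interior C) \<inter> C \<subseteq> frontier K \<inter> frontier C"
      using \<open>closed C\<close> by (auto simp: frontier_def)
    ultimately have "v \<in> contingent_cone (frontier K \<inter> frontier C) x"
      using contingent_cone_mono by blast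
    then show False
      using assms(2,4) v unfolding assumption2_def by blast
  qed
  with inside show "v \<in> contingent_cone (frontier K \<inter> C) x - contingent_cone (frontier K - interior C) x"
    by blast
qed

theorem proposition3:
  fixes C K :: "'a::euclidean_space set" and F :: "'a \<Rightarrow> 'a set"
    and \<phi> :: "real \<Rightarrow> 'a" and D :: "real set" and x :: 'a
  assumes "closed K"
    and "standing_assumption C F"
    and "assumption1 C F K" and "assumption2 C F K" and "assumption3 C K"
    and "is_solution C F \<phi> D"
    and "\<phi> 0 = x" and "x \<in> bad_points C K"
    and "leaves_immediately C K \<phi> D"
  shows "closure (initial_speeds \<phi> D) \<subseteq>
           contingent_cone (frontier K \<inter> C) x - contingent_cone (frontier K - interior C) x"
proof -
  have "closed C"
    using assms(2) by (simp add: standing_assumption_def)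
  show ?thesis
    using closure_initial_speeds_subset[OF assms(2,3,6-9)]
      tangent_cones_at_bad_point[OF \<open>closed C\<close> assms(4,5,8)] by blast
qed

end
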